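(* In the imprimitive setting described in the context, suppose $K_0\ne1$ and $K_v\cong D_{2m}$ where $m=n$ or $2m=n$. Then $K\cong\mathbb{Z}_p^2\rtimes\mathbb{Z}_2$ or $K\cong\mathbb{Z}_p^2\rtimes D_4$, where $D_4\cong\mathbb{Z}_2\times\mathbb{Z}_2$.
   Context: Setting: $p\ge3$ is a prime, $G$ is a transitive permutation group of degree $p^2$ on a set $\Omega$ with point stabilizers $G_v\cong D_{2n}$ (dihedral of order $2n$, $n\ge2$), and $G$ is imprimitive; $\mathcal{B}$ is a nontrivial complete block system of $G$ (blocks of size $p$), $K$ is the kernel of the action of $G$ on $\mathcal{B}$, $B\in\mathcal{B}$ is a block, $v\in B$, $K_v$ is the stabilizer of $v$ in $K$, and $K_0$ is the kernel of the action of $K$ on $B$. $D_{2m}$ is dihedral of order $2m$. *)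

theory Defs
  imports "HOL-Algebra.Algebra" "HOL-Library.Disjoint_Sets"
begin

text \<open>The dihedral group of order 2n (i.e. D_{2n} in the paper's notation):
  elements (k, e) stand for r^k s^e with 0 \<le> k < n, where r is a rotation
  of order n and s a reflection with s r s = r^{-1}.\<close>
definition dihedral_group :: "nat \<Rightarrow> (int \<times> bool) monoid" where
  "dihedral_group n =
     \<lparr>carrier = {0..<int n} \<times> (UNIV :: bool set),
      monoid.mult = (\<lambda>x y. ((fst x + (if snd x then - fst y else fst y)) mod int n, snd x \<noteq> snd y)),
      one = (0, False)\<rparr>"

definition semidirect_prod ::
  "('n, 'x) monoid_scheme \<Rightarrow> ('h, 'y) monoid_scheme \<Rightarrow> ('h \<Rightarrow> 'n \<Rightarrow> 'n) \<Rightarrow> ('n \<times> 'h) monoid" where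
  "semidirect_prod N H phi =
     \<lparr>carrier = carrier N \<times> carrier H,
      monoid.mult = (\<lambda>u w. (fst u \<otimes>\<^bsub>N\<^esub> phi (snd u) (fst w), snd u \<otimes>\<^bsub>H\<^esub> snd w)),
      one = (\<one>\<^bsub>N\<^esub>, \<one>\<^bsub>H\<^esub>)\<rparr>"

definition is_semidirect_of ::
  "('g, 'z) monoid_scheme \<Rightarrow> ('n, 'x) monoid_scheme \<Rightarrow> ('h, 'y) monoid_scheme \<Rightarrow> bool" where
  "is_semidirect_of K N H \<longleftrightarrow>
     (\<exists>phi. phi \<in> hom H (AutoGroup N) \<and> K \<cong> semidirect_prod N H phi)"

definition perm_group :: "'a set \<Rightarrow> ('a \<Rightarrow> 'a) set \<Rightarrow> ('a \<Rightarrow> 'a) monoid" where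
  "perm_group \<Omega> G = (BijGroup \<Omega>)\<lparr>carrier := G\<rparr>"

definition transitive_on :: "'a set \<Rightarrow> ('a \<Rightarrow> 'a) set \<Rightarrow> bool" where
  "transitive_on \<Omega> G \<longleftrightarrow> (\<forall>x\<in>\<Omega>. \<forall>y\<in>\<Omega>. \<exists>g\<in>G. g x = y)"

definition point_stabilizer :: "('a \<Rightarrow> 'a) set \<Rightarrow> 'a \<Rightarrow> ('a \<Rightarrow> 'a) set" where
  "point_stabilizer G v = {g \<in> G. g v = v}"

definition block_system :: "'a set \<Rightarrow> ('a \<Rightarrow> 'a) set \<Rightarrow> 'a set set \<Rightarrow> bool" where
  "block_system \<Omega> G \<B> \<longleftrightarrow> partition_on \<Omega> \<B> \<and> (\<forall>g\<in>G. \<forall>B\<in>\<B>. g ` B \<in> \<B>)"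

definition block_kernel :: "('a \<Rightarrow> 'a) set \<Rightarrow> 'a set set \<Rightarrow> ('a \<Rightarrow> 'a) set" where
  "block_kernel G \<B> = {g \<in> G. \<forall>B\<in>\<B>. g ` B = B}"

definition pointwise_kernel :: "('a \<Rightarrow> 'a) set \<Rightarrow> 'a set \<Rightarrow> ('a \<Rightarrow> 'a) set" where
  "pointwise_kernel K B = {g \<in> K. \<forall>x\<in>B. g x = x}"

end

theory Submission
  imports Defs
begin

text \<open>
  \<open>K\<close> is normal in \<open>G\<close> and \<open>K\<^sub>0\<close> is normal in \<open>K\<close>. The orbits of a normal subgroup of a
  transitive group all have the same size, so on a block of prime size it is either trivial or
  transitive; as \<open>K\<^sub>0 \<noteq> 1\<close>, \<open>K\<close> is transitive on every block and \<open>K\<^sub>0\<close> on some block, hence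
  \<open>p\<close> divides \<open>|K\<^sub>0|\<close> and \<open>K\<^sub>0\<close> contains an element \<open>q\<close> of order \<open>p\<close>. In \<open>K\<^sub>v \<cong> D\<^sub>2\<^sub>m\<close> the
  elements of order \<open>p\<close> are rotations and there are at most \<open>p\<close> of them, so the elements of
  order \<open>p\<close> of \<open>K\<^sub>0\<close> form the subgroup \<open>\<langle>q\<rangle>\<close>, which is normal in \<open>K\<close>, and \<open>p\<close> divides \<open>m\<close>.

  Conjugating \<open>q\<close> by \<open>G\<close> gives, for every block \<open>C\<close>, an element \<open>r\<close> of order \<open>p\<close> that is
  transitive on \<open>C\<close> and generates a normal subgroup of \<open>K\<close>. Since \<open>K\<close> acts on \<open>\<langle>r\<rangle>\<close> through
  the commutative monoid of exponents, the reflections \<open>\<rho>\<sigma>\<close> and \<open>\<sigma>\<rho>\<close> of \<open>K\<^sub>v\<close> act alike on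
  \<open>\<langle>r\<rangle>\<close>, so the rotation \<open>(\<sigma>\<rho>)(\<rho>\<sigma>) = \<rho>\<^sup>-\<^sup>2\<close> centralises \<open>r\<close>. Its \<open>p\<close>-th power therefore
  fixes every point, whence \<open>m\<close> divides \<open>2p\<close>: \<open>m = p\<close> or \<open>m = 2p\<close>, and \<open>|K| = p \<cdot> 2m\<close>.

  Finally \<open>q\<close> commutes with the element \<open>r\<^sub>B\<close> for the block \<open>B\<close>, so \<open>\<langle>q\<rangle> \<times> \<langle>r\<^sub>B\<rangle> \<cong> \<int>\<^sub>p\<^sup>2\<close>
  is a normal subgroup of \<open>K\<close>; it is complemented by \<open>\<langle>\<sigma>\<rangle> \<cong> \<int>\<^sub>2\<close> if \<open>m = p\<close> and by
  \<open>{1, \<rho>\<^sup>p, \<sigma>, \<rho>\<^sup>p\<sigma>} \<cong> D\<^sub>4\<close> if \<open>m = 2p\<close>.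
\<close>

lemma carrier_BijGroup [simp]: "carrier (BijGroup \<Omega>) = Bij \<Omega>"
  by (simp add: BijGroup_def)

lemma BijGroup_mult_apply:
  "f \<in> Bij \<Omega> \<Longrightarrow> g \<in> Bij \<Omega> \<Longrightarrow> x \<in> \<Omega> \<Longrightarrow> (f \<otimes>\<^bsub>BijGroup \<Omega>\<^esub> g) x = f (g x)"
  by (simp add: BijGroup_def compose_def)

lemma BijGroup_one: "\<one>\<^bsub>BijGroup \<Omega>\<^esub> = (\<lambda>x\<in>\<Omega>. x)"
  by (simp add: BijGroup_def)

lemma BijGroup_one_apply: "x \<in> \<Omega> \<Longrightarrow> \<one>\<^bsub>BijGroup \<Omega>\<^esub> x = x"
  by (simp add: BijGroup_def)

lemma Bij_apply_closed: "f \<in> Bij \<Omega> \<Longrightarrow> x \<in> \<Omega> \<Longrightarrow> f x \<in> \<Omega>"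
  by (auto simp: Bij_def bij_betw_def)

lemma BijGroup_one_closed [simp]: "\<one>\<^bsub>BijGroup \<Omega>\<^esub> \<in> Bij \<Omega>"
  by (simp add: BijGroup_one id_Bij)

lemma BijGroup_inv_closed [simp]: "f \<in> Bij \<Omega> \<Longrightarrow> inv\<^bsub>BijGroup \<Omega>\<^esub> f \<in> Bij \<Omega>"
  using group.inv_closed[OF group_BijGroup, of f \<Omega>] by simp

lemma BijGroup_mult_closed [simp]:
  "f \<in> Bij \<Omega> \<Longrightarrow> g \<in> Bij \<Omega> \<Longrightarrow> f \<otimes>\<^bsub>BijGroup \<Omega>\<^esub> g \<in> Bij \<Omega>"
  using monoid.m_closed[OF group.is_monoid[OF group_BijGroup], of f \<Omega> g] by simp

lemma BijGroup_pow_closed [simp]: "f \<in> Bij \<Omega> \<Longrightarrow> f [^]\<^bsub>BijGroup \<Omega>\<^esub> (k::nat) \<in> Bij \<Omega>"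
  using monoid.nat_pow_closed[OF group.is_monoid[OF group_BijGroup], of f \<Omega> k] by simp

lemma BijGroup_apply_inv:
  assumes "f \<in> Bij \<Omega>" "x \<in> \<Omega>"
  shows "f ((inv\<^bsub>BijGroup \<Omega>\<^esub> f) x) = x"
proof -
  have "f \<otimes>\<^bsub>BijGroup \<Omega>\<^esub> inv\<^bsub>BijGroup \<Omega>\<^esub> f = \<one>\<^bsub>BijGroup \<Omega>\<^esub>"
    using group.r_inv[OF group_BijGroup] assms(1) by simp
  then show ?thesis
    using BijGroup_mult_apply[of f \<Omega> "inv\<^bsub>BijGroup \<Omega>\<^esub> f"] assms by (simp add: BijGroup_one_apply)
qed

lemma BijGroup_inv_apply:
  assumes "f \<in> Bij \<Omega>" "x \<in> \<Omega>"
  shows "(inv\<^bsub>BijGroup \<Omega>\<^esub> f) (f x) = x"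
proof -
  have "inv\<^bsub>BijGroup \<Omega>\<^esub> f \<otimes>\<^bsub>BijGroup \<Omega>\<^esub> f = \<one>\<^bsub>BijGroup \<Omega>\<^esub>"
    using group.l_inv[OF group_BijGroup] assms(1) by simp
  then show ?thesis
    using BijGroup_mult_apply[of "inv\<^bsub>BijGroup \<Omega>\<^esub> f" \<Omega> f] assms by (simp add: BijGroup_one_apply)
qed

lemma BijGroup_conj_apply:
  "h \<in> Bij \<Omega> \<Longrightarrow> g \<in> Bij \<Omega> \<Longrightarrow> y \<in> \<Omega> \<Longrightarrow>
    (h \<otimes>\<^bsub>BijGroup \<Omega>\<^esub> g \<otimes>\<^bsub>BijGroup \<Omega>\<^esub> inv\<^bsub>BijGroup \<Omega>\<^esub> h) y = h (g ((inv\<^bsub>BijGroup \<Omega>\<^esub> h) y))"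
  by (simp add: BijGroup_mult_apply Bij_apply_closed)

lemma BijGroup_image_mult:
  "f \<in> Bij \<Omega> \<Longrightarrow> g \<in> Bij \<Omega> \<Longrightarrow> C \<subseteq> \<Omega> \<Longrightarrow> (f \<otimes>\<^bsub>BijGroup \<Omega>\<^esub> g) ` C = f ` g ` C"
  by (auto simp: BijGroup_mult_apply image_image subset_iff intro!: image_cong)

lemma BijGroup_image_inv:
  assumes "f \<in> Bij \<Omega>" "C \<subseteq> \<Omega>"
  shows "f ` (inv\<^bsub>BijGroup \<Omega>\<^esub> f) ` C = C" and "f ` C = C \<Longrightarrow> (inv\<^bsub>BijGroup \<Omega>\<^esub> f) ` C = C"
proof -
  show "f ` (inv\<^bsub>BijGroup \<Omega>\<^esub> f) ` C = C"
    using assms by (auto simp: image_image subset_iff BijGroup_apply_inv)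
  assume "f ` C = C"
  then have "(inv\<^bsub>BijGroup \<Omega>\<^esub> f) ` C = (inv\<^bsub>BijGroup \<Omega>\<^esub> f) ` f ` C" by simp
  also have "\<dots> = C" using assms by (auto simp: image_image subset_iff BijGroup_inv_apply)
  finally show "(inv\<^bsub>BijGroup \<Omega>\<^esub> f) ` C = C" .
qed

lemma BijGroup_eqI:
  assumes "f \<in> Bij \<Omega>" "g \<in> Bij \<Omega>" "\<And>x. x \<in> \<Omega> \<Longrightarrow> f x = g x"
  shows "f = g"
  using assms by (auto simp: Bij_def intro: extensionalityI)

lemma BijGroup_eq_oneI:
  assumes "f \<in> Bij \<Omega>" "\<And>x. x \<in> \<Omega> \<Longrightarrow> f x = x"
  shows "f = \<one>\<^bsub>BijGroup \<Omega>\<^esub>"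
  using assms by (intro BijGroup_eqI[of _ \<Omega>]) (auto simp: BijGroup_one_apply)

lemma finite_Bij: "finite \<Omega> \<Longrightarrow> finite (Bij \<Omega>)"
proof -
  assume "finite \<Omega>"
  moreover have "Bij \<Omega> \<subseteq> \<Omega> \<rightarrow>\<^sub>E \<Omega>" by (auto simp: Bij_def bij_betw_def PiE_def)
  ultimately show ?thesis by (meson finite_PiE finite_subset)
qed

section \<open>Orbits of permutation groups\<close>

definition perm_orbit :: "('a \<Rightarrow> 'a) set \<Rightarrow> 'a \<Rightarrow> 'a set" where
  "perm_orbit N x = (\<lambda>g. g x) ` N"

lemma card_perm_orbit_mult_card_stabilizer:
  assumes "finite \<Omega>" and N: "subgroup N (BijGroup \<Omega>)" and x: "x \<in> \<Omega>"
  shows "card (perm_orbit N x) * card {g \<in> N. g x = x} = card N"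
proof -
  let ?N = "(BijGroup \<Omega>)\<lparr>carrier := N\<rparr>"
  have grN: "group ?N" by (rule group.subgroup_imp_group[OF group_BijGroup N])
  have "(\<lambda>g. g) \<in> hom ?N (BijGroup \<Omega>)"
    using subgroup.subset[OF N] by (auto simp: hom_def)
  then interpret group_action ?N \<Omega> "\<lambda>g. g"
    using grN group_BijGroup by (simp add: group_action_def group_hom_def group_hom_axioms_def)
  have "card (orbit ?N (\<lambda>g. g) x) * card (stabilizer ?N (\<lambda>g. g) x) = order ?N"
    by (rule orbit_stabilizer_theorem[OF x])
  moreover have "orbit ?N (\<lambda>g. g) x = perm_orbit N x"
    unfolding orbit_def perm_orbit_def by auto
  moreover have "stabilizer ?N (\<lambda>g. g) x = {g \<in> N. g x = x}"
    unfolding stabilizer_def by auto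
  ultimately show ?thesis by (simp add: order_def)
qed

lemma perm_orbit_subset:
  "subgroup N (BijGroup \<Omega>) \<Longrightarrow> x \<in> \<Omega> \<Longrightarrow> perm_orbit N x \<subseteq> \<Omega>"
  using subgroup.subset by (fastforce simp: perm_orbit_def Bij_apply_closed)

lemma mem_perm_orbit_self:
  "subgroup N (BijGroup \<Omega>) \<Longrightarrow> x \<in> \<Omega> \<Longrightarrow> x \<in> perm_orbit N x"
  unfolding perm_orbit_def
  by (rule rev_image_eqI[OF subgroup.one_closed]) (auto simp: BijGroup_one_apply)

lemma perm_orbit_eq:
  assumes N: "subgroup N (BijGroup \<Omega>)" and y: "y \<in> \<Omega>" "z \<in> perm_orbit N y"
  shows "perm_orbit N z = perm_orbit N y"
proof -
  have NS: "N \<subseteq> Bij \<Omega>" using subgroup.subset[OF N] by simp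
  obtain n where n: "n \<in> N" "z = n y" using y unfolding perm_orbit_def by blast
  have "w \<in> perm_orbit N y" if "w = n' z" "n' \<in> N" for n' w
  proof -
    have "n' \<in> Bij \<Omega>" "n \<in> Bij \<Omega>" using n that NS by auto
    then have "w = (n' \<otimes>\<^bsub>BijGroup \<Omega>\<^esub> n) y"
      using n that y by (simp add: BijGroup_mult_apply)
    moreover have "n' \<otimes>\<^bsub>BijGroup \<Omega>\<^esub> n \<in> N" using subgroup.m_closed[OF N that(2) n(1)] .
    ultimately show ?thesis unfolding perm_orbit_def by blast
  qed
  moreover have "w \<in> perm_orbit N z" if "w = n' y" "n' \<in> N" for n' w
  proof -
    have "n' \<in> Bij \<Omega>" "n \<in> Bij \<Omega>" using n that NS by auto
    then have "w = (n' \<otimes>\<^bsub>BijGroup \<Omega>\<^esub> inv\<^bsub>BijGroup \<Omega>\<^esub> n) z"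
      using n that y by (simp add: BijGroup_mult_apply BijGroup_inv_apply Bij_apply_closed)
    moreover have "n' \<otimes>\<^bsub>BijGroup \<Omega>\<^esub> inv\<^bsub>BijGroup \<Omega>\<^esub> n \<in> N"
      using subgroup.m_closed[OF N that(2) subgroup.m_inv_closed[OF N n(1)]] .
    ultimately show ?thesis unfolding perm_orbit_def by blast
  qed
  ultimately show ?thesis unfolding perm_orbit_def by blast
qed

lemma perm_orbit_image_normalizing:
  assumes H: "subgroup H (BijGroup \<Omega>)" and N: "subgroup N (BijGroup \<Omega>)"
    and norm: "\<forall>h\<in>H. \<forall>n\<in>N. h \<otimes>\<^bsub>BijGroup \<Omega>\<^esub> n \<otimes>\<^bsub>BijGroup \<Omega>\<^esub> inv\<^bsub>BijGroup \<Omega>\<^esub> h \<in> N"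
    and h: "h \<in> H" and y: "y \<in> \<Omega>"
  shows "perm_orbit N (h y) = h ` perm_orbit N y"
proof
  have NS: "N \<subseteq> Bij \<Omega>" using subgroup.subset[OF N] by simp
  have hB: "h \<in> Bij \<Omega>" using subgroup.subset[OF H] h by auto
  have hinv: "inv\<^bsub>BijGroup \<Omega>\<^esub> h \<in> H" using subgroup.m_inv_closed[OF H h] .
  show "h ` perm_orbit N y \<subseteq> perm_orbit N (h y)"
  proof
    fix z assume "z \<in> h ` perm_orbit N y"
    then obtain n where n: "n \<in> N" "z = h (n y)" unfolding perm_orbit_def by blast
    let ?n = "h \<otimes>\<^bsub>BijGroup \<Omega>\<^esub> n \<otimes>\<^bsub>BijGroup \<Omega>\<^esub> inv\<^bsub>BijGroup \<Omega>\<^esub> h"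
    have "?n (h y) = z"
      using n hB NS y by (auto simp: BijGroup_conj_apply Bij_apply_closed BijGroup_inv_apply)
    then show "z \<in> perm_orbit N (h y)"
      using norm h n unfolding perm_orbit_def by (metis rev_image_eqI)
  qed
  show "perm_orbit N (h y) \<subseteq> h ` perm_orbit N y"
  proof
    fix z assume "z \<in> perm_orbit N (h y)"
    then obtain n where n: "n \<in> N" "z = n (h y)" unfolding perm_orbit_def by blast
    let ?h' = "inv\<^bsub>BijGroup \<Omega>\<^esub> h"
    let ?n = "?h' \<otimes>\<^bsub>BijGroup \<Omega>\<^esub> n \<otimes>\<^bsub>BijGroup \<Omega>\<^esub> inv\<^bsub>BijGroup \<Omega>\<^esub> ?h'"
    have "h (?n y) = z"
      using n hB NS y group.inv_inv[OF group_BijGroup, of h \<Omega>]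
      by (auto simp: BijGroup_mult_apply Bij_apply_closed BijGroup_apply_inv subset_iff)
    moreover have "?n y \<in> perm_orbit N y"
      using norm hinv n unfolding perm_orbit_def by blast
    ultimately show "z \<in> h ` perm_orbit N y" by blast
  qed
qed

lemma card_perm_orbit_dvd_card:
  assumes N: "subgroup N (BijGroup \<Omega>)" and C: "finite C" "C \<subseteq> \<Omega>" "\<forall>n\<in>N. \<forall>x\<in>C. n x \<in> C"
    and card_orbit: "\<forall>x\<in>C. card (perm_orbit N x) = s"
  shows "s dvd card C"
proof -
  have orbit_C: "perm_orbit N x \<subseteq> C" if "x \<in> C" for x
    using C(3) that unfolding perm_orbit_def by blast
  have "\<Union>(perm_orbit N ` C) = C"
  proof
    show "\<Union>(perm_orbit N ` C) \<subseteq> C" using orbit_C by blast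
    show "C \<subseteq> \<Union>(perm_orbit N ` C)" using mem_perm_orbit_self[OF N] C(2) by blast
  qed
  moreover have "s * card (perm_orbit N ` C) = card (\<Union>(perm_orbit N ` C))"
  proof (rule card_partition)
    show "finite (\<Union>(perm_orbit N ` C))" using finite_subset[OF _ C(1)] orbit_C by blast
    show "card c = s" if "c \<in> perm_orbit N ` C" for c
      using card_orbit that by blast
    show "c1 \<inter> c2 = {}"
      if c: "c1 \<in> perm_orbit N ` C" "c2 \<in> perm_orbit N ` C" "c1 \<noteq> c2" for c1 c2
    proof (rule ccontr)
      obtain a b where ab: "a \<in> C" "b \<in> C" "c1 = perm_orbit N a" "c2 = perm_orbit N b"
        using c(1,2) by blast
      assume "c1 \<inter> c2 \<noteq> {}"
      then obtain z where "z \<in> perm_orbit N a" "z \<in> perm_orbit N b" using ab by blast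
      then have "perm_orbit N z = c1" "perm_orbit N z = c2"
        using perm_orbit_eq[OF N] ab C(2) by (auto simp: subset_iff)
      then show False using c(3) by simp
    qed
  qed (use C(1) in simp)
  ultimately show ?thesis by (metis dvd_triv_left)
qed

text \<open>A normal subgroup \<open>N\<close> of a group transitive on \<open>A\<close> has orbits of equal size on \<open>A\<close>, so on
  an \<open>N\<close>-invariant subset of prime size it is either trivial or transitive.\<close>

lemma normal_subgroup_transitive_on_prime_block:
  assumes fin: "finite \<Omega>"
    and H: "subgroup H (BijGroup \<Omega>)" and N: "subgroup N (BijGroup \<Omega>)"
    and norm: "\<forall>h\<in>H. \<forall>n\<in>N. h \<otimes>\<^bsub>BijGroup \<Omega>\<^esub> n \<otimes>\<^bsub>BijGroup \<Omega>\<^esub> inv\<^bsub>BijGroup \<Omega>\<^esub> h \<in> N"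
    and A: "A \<subseteq> \<Omega>" and trans: "\<forall>x\<in>A. \<forall>y\<in>A. \<exists>h\<in>H. h x = y"
    and C: "C \<subseteq> A" "\<forall>n\<in>N. \<forall>x\<in>C. n x \<in> C" "Factorial_Ring.prime (card C)"
    and moved: "x0 \<in> A" "n0 \<in> N" "n0 x0 \<noteq> x0"
  shows "\<forall>x\<in>C. \<forall>y\<in>C. \<exists>n\<in>N. n x = y"
proof -
  have C\<Omega>: "C \<subseteq> \<Omega>" and x0: "x0 \<in> \<Omega>" using C(1) A moved(1) by auto
  have finC: "finite C" using finite_subset[OF C\<Omega> fin] .
  have card_orbit: "card (perm_orbit N x) = card (perm_orbit N x0)" if x: "x \<in> A" for x
  proof -
    obtain h where h: "h \<in> H" "h x0 = x" using trans moved(1) x by blast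
    have "inj_on h \<Omega>" using subgroup.subset[OF H] h(1) by (auto simp: Bij_def bij_betw_def)
    then have "inj_on h (perm_orbit N x0)" using inj_on_subset perm_orbit_subset[OF N x0] by blast
    moreover have "perm_orbit N x = h ` perm_orbit N x0"
      using perm_orbit_image_normalizing[OF H N norm h(1) x0] h(2) by simp
    ultimately show ?thesis by (simp add: card_image)
  qed
  have "card (perm_orbit N x0) \<ge> 2"
  proof -
    have "{x0, n0 x0} \<subseteq> perm_orbit N x0"
      using mem_perm_orbit_self[OF N x0] moved(2) unfolding perm_orbit_def by auto
    moreover have "finite (perm_orbit N x0)" using finite_subset[OF perm_orbit_subset[OF N x0] fin] .
    moreover have "card {x0, n0 x0} = 2" using moved(3) by simp
    ultimately show ?thesis by (metis card_mono)
  qed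
  moreover have "card (perm_orbit N x0) dvd card C"
    using card_perm_orbit_dvd_card[OF N finC C\<Omega> C(2)] card_orbit C(1) by blast
  ultimately have "card (perm_orbit N x0) = card C"
    using C(3) unfolding prime_nat_iff by (metis numeral_le_one_iff semiring_norm(69))
  have "perm_orbit N x = C" if "x \<in> C" for x
  proof (rule card_subset_eq[OF finC])
    show "perm_orbit N x \<subseteq> C" using C(2) that unfolding perm_orbit_def by blast
    show "card (perm_orbit N x) = card C"
      using card_orbit \<open>card (perm_orbit N x0) = card C\<close> that C(1) by auto
  qed
  then show ?thesis unfolding perm_orbit_def by blast
qed

context group
begin

lemma inv_mult_cancel_left: "g \<in> carrier G \<Longrightarrow> y \<in> carrier G \<Longrightarrow> inv g \<otimes> (g \<otimes> y) = y"
  by (simp add: m_assoc[symmetric])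

lemma mult_inv_cancel_left: "g \<in> carrier G \<Longrightarrow> y \<in> carrier G \<Longrightarrow> g \<otimes> (inv g \<otimes> y) = y"
  by (simp add: m_assoc[symmetric])

lemma subgroup_nat_pow_closed: "subgroup H G \<Longrightarrow> x \<in> H \<Longrightarrow> x [^] (n::nat) \<in> H"
  by (induction n) (simp_all add: subgroup.one_closed subgroup.m_closed)

lemma conj_nat_pow:
  assumes "g \<in> carrier G" "x \<in> carrier G"
  shows "(g \<otimes> x \<otimes> inv g) [^] (n::nat) = g \<otimes> x [^] n \<otimes> inv g"
proof (induction n)
  case (Suc n)
  have "(g \<otimes> x \<otimes> inv g) [^] Suc n = (g \<otimes> x [^] n \<otimes> inv g) \<otimes> (g \<otimes> x \<otimes> inv g)"
    using Suc by simp
  also have "\<dots> = g \<otimes> x [^] n \<otimes> (inv g \<otimes> g) \<otimes> x \<otimes> inv g"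
    using assms by (simp only: m_assoc inv_closed nat_pow_closed m_closed)
  also have "\<dots> = g \<otimes> (x [^] n \<otimes> x) \<otimes> inv g"
    using assms by (simp add: m_assoc)
  finally show ?case by simp
qed (use assms in simp)

lemma conj_conj:
  assumes "a \<in> carrier G" "b \<in> carrier G" "c \<in> carrier G"
  shows "a \<otimes> (b \<otimes> c \<otimes> inv b) \<otimes> inv a = (a \<otimes> b) \<otimes> c \<otimes> inv (a \<otimes> b)"
  using assms by (simp add: m_assoc inv_mult_group)

lemma conj_by_conjugate:
  assumes "k \<in> carrier G" "g \<in> carrier G" "q \<in> carrier G"
  shows "k \<otimes> (g \<otimes> q \<otimes> inv g) \<otimes> inv k
       = g \<otimes> ((inv g \<otimes> k \<otimes> g) \<otimes> q \<otimes> inv (inv g \<otimes> k \<otimes> g)) \<otimes> inv g"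
  using assms by (simp add: m_assoc inv_mult_group inv_mult_cancel_left mult_inv_cancel_left)

lemma conj_nat_pow_if_conj_eq_pow:
  assumes "a \<in> carrier G" "r \<in> carrier G" "a \<otimes> r \<otimes> inv a = r [^] (e::nat)"
  shows "a \<otimes> r [^] (j::nat) \<otimes> inv a = r [^] (e * j)"
  using conj_nat_pow[OF assms(1,2), of j] assms by (simp add: nat_pow_pow)

lemma commutes_if_conj_eq:
  assumes "x \<in> carrier G" "y \<in> carrier G" "r \<in> carrier G"
    and "x \<otimes> r \<otimes> inv x = y \<otimes> r \<otimes> inv y"
  shows "(inv y \<otimes> x) \<otimes> r = r \<otimes> (inv y \<otimes> x)"
proof -
  have "x \<otimes> r = y \<otimes> r \<otimes> inv y \<otimes> x"
    using assms by (metis inv_closed m_assoc m_closed r_one l_inv)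
  then have "inv y \<otimes> (x \<otimes> r) = inv y \<otimes> (y \<otimes> r \<otimes> inv y \<otimes> x)" by simp
  then show ?thesis using assms by (simp add: m_assoc[symmetric])
qed

lemma inj_on_nat_pow_prime:
  assumes "x \<in> carrier G" "x \<noteq> \<one>" "x [^] (p::nat) = \<one>" "Factorial_Ring.prime p"
  shows "inj_on (\<lambda>i. x [^] i) {..<p}"
proof -
  have "ord x dvd p" using assms pow_eq_id by blast
  moreover have "ord x \<noteq> 1" using assms ord_eq_1 by blast
  ultimately have "ord x = p" using assms(4) unfolding prime_nat_iff by blast
  moreover have "p > 0" using assms(4) prime_gt_0_nat by blast
  ultimately have "{..<p} = {0..ord x - 1}" by auto
  then show ?thesis using ord_inj[OF assms(1)] by simp
qed

lemma nat_pow_mod_eq: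
  assumes "x \<in> carrier G" "x [^] (p::nat) = \<one>"
  shows "x [^] (i mod p) = x [^] i"
proof -
  have "x [^] i = x [^] (i mod p + p * (i div p))" by simp
  also have "\<dots> = x [^] (i mod p) \<otimes> (x [^] p) [^] (i div p)"
    using assms(1) by (simp add: nat_pow_mult nat_pow_pow)
  finally show ?thesis using assms by simp
qed

lemma eq_one_if_square_and_odd_pow:
  assumes "x \<in> carrier G" "x \<otimes> x = \<one>" "x [^] (p::nat) = \<one>" "odd p"
  shows "x = \<one>"
proof -
  obtain k where k: "p = 2 * k + 1" using assms(4) oddE by blast
  have "x [^] (2::nat) = \<one>" using assms(1,2) by (simp add: numeral_2_eq_2)
  then have "x [^] p = x" using k assms(1) by (simp add: nat_pow_mult[symmetric] nat_pow_pow[symmetric])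
  then show ?thesis using assms(3) by simp
qed

lemma inv_nat_pow_eq:
  assumes "x \<in> carrier G" "x [^] (p::nat) = \<one>" "p > 0"
  shows "inv (x [^] (i::nat)) = x [^] ((p - 1) * i)"
proof -
  have "(p - 1) * i + i = p * i" using assms(3) by (simp add: diff_mult_distrib)
  then have "x [^] ((p - 1) * i) \<otimes> x [^] i = (x [^] p) [^] i"
    using assms(1) by (simp add: nat_pow_mult nat_pow_pow)
  then show ?thesis using assms by (intro inv_equality) simp_all
qed

end

section \<open>Internal semidirect products\<close>

text \<open>Unlike \<open>group.iso_set_sym\<close>, this only needs \<open>A\<close> to be closed under multiplication.\<close>

lemma bij_hom_inv_into_iso:
  assumes "h \<in> hom A B" "bij_betw h (carrier A) (carrier B)"
    and "\<And>x y. x \<in> carrier A \<Longrightarrow> y \<in> carrier A \<Longrightarrow> x \<otimes>\<^bsub>A\<^esub> y \<in> carrier A"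
  shows "inv_into (carrier A) h \<in> iso B A"
proof -
  have inv: "bij_betw (inv_into (carrier A) h) (carrier B) (carrier A)"
    using assms(2) by (simp add: bij_betw_inv_into)
  then have closed: "inv_into (carrier A) h x \<in> carrier A" if "x \<in> carrier B" for x
    using that by (meson bij_betwE)
  have "inv_into (carrier A) h \<in> hom B A"
  proof (rule homI)
    show "inv_into (carrier A) h (x \<otimes>\<^bsub>B\<^esub> y)
        = inv_into (carrier A) h x \<otimes>\<^bsub>A\<^esub> inv_into (carrier A) h y"
      if "x \<in> carrier B" "y \<in> carrier B" for x y
    proof (rule inv_into_f_eq)
      show "inj_on h (carrier A)" using assms(2) by (simp add: bij_betw_def)
      show "inv_into (carrier A) h x \<otimes>\<^bsub>A\<^esub> inv_into (carrier A) h y \<in> carrier A"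
        using assms(3) closed that by blast
      show "h (inv_into (carrier A) h x \<otimes>\<^bsub>A\<^esub> inv_into (carrier A) h y) = x \<otimes>\<^bsub>B\<^esub> y"
        using assms(1,2) closed that by (simp add: hom_mult bij_betw_inv_into_right)
    qed
  qed (use closed in blast)
  then show ?thesis using inv by (simp add: iso_def)
qed

locale internal_semidirect =
  K: group Kg + N: group N + H: group H
  for Kg :: "('k, 'c) monoid_scheme" and N :: "('n, 'd) monoid_scheme"
    and H :: "('h, 'e) monoid_scheme" +
  fixes \<alpha> :: "'n \<Rightarrow> 'k" and \<beta> :: "'h \<Rightarrow> 'k"
  assumes finite_N: "finite (carrier N)" and finite_H: "finite (carrier H)"
    and alpha_hom: "\<alpha> \<in> hom N Kg" and alpha_inj: "inj_on \<alpha> (carrier N)"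
    and beta_hom: "\<beta> \<in> hom H Kg" and beta_inj: "inj_on \<beta> (carrier H)"
    and normalizes: "\<And>h x. h \<in> carrier H \<Longrightarrow> x \<in> carrier N \<Longrightarrow>
       \<beta> h \<otimes>\<^bsub>Kg\<^esub> \<alpha> x \<otimes>\<^bsub>Kg\<^esub> inv\<^bsub>Kg\<^esub> (\<beta> h) \<in> \<alpha> ` carrier N"
    and trivial_intersection: "\<And>x h. x \<in> carrier N \<Longrightarrow> h \<in> carrier H \<Longrightarrow>
       \<alpha> x = \<beta> h \<Longrightarrow> \<alpha> x = \<one>\<^bsub>Kg\<^esub>"
    and card_eq: "card (carrier Kg) = card (carrier N) * card (carrier H)"
begin

sublocale alpha: group_hom N Kg \<alpha>
  using alpha_hom by (simp add: group_hom_def group_hom_axioms_def K.group_axioms N.group_axioms)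

sublocale beta: group_hom H Kg \<beta>
  using beta_hom by (simp add: group_hom_def group_hom_axioms_def K.group_axioms H.group_axioms)

definition conj_action :: "'h \<Rightarrow> 'n \<Rightarrow> 'n" where
  "conj_action h = (\<lambda>x\<in>carrier N. inv_into (carrier N) \<alpha> (\<beta> h \<otimes>\<^bsub>Kg\<^esub> \<alpha> x \<otimes>\<^bsub>Kg\<^esub> inv\<^bsub>Kg\<^esub> (\<beta> h)))"

lemma conj_action_closed: "h \<in> carrier H \<Longrightarrow> x \<in> carrier N \<Longrightarrow> conj_action h x \<in> carrier N"
  using normalizes unfolding conj_action_def by (simp add: inv_into_into)

lemma alpha_conj_action:
  "h \<in> carrier H \<Longrightarrow> x \<in> carrier N \<Longrightarrow>
    \<alpha> (conj_action h x) = \<beta> h \<otimes>\<^bsub>Kg\<^esub> \<alpha> x \<otimes>\<^bsub>Kg\<^esub> inv\<^bsub>Kg\<^esub> (\<beta> h)"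
  using normalizes unfolding conj_action_def by (simp add: f_inv_into_f)

lemma alpha_eq_iff: "x \<in> carrier N \<Longrightarrow> y \<in> carrier N \<Longrightarrow> \<alpha> x = \<alpha> y \<longleftrightarrow> x = y"
  using alpha_inj by (auto simp: inj_on_def)

lemma conj_action_auto:
  assumes h: "h \<in> carrier H"
  shows "conj_action h \<in> auto N"
proof -
  have hom: "conj_action h \<in> hom N N"
  proof (rule homI)
    show "conj_action h (x \<otimes>\<^bsub>N\<^esub> y) = conj_action h x \<otimes>\<^bsub>N\<^esub> conj_action h y"
      if "x \<in> carrier N" "y \<in> carrier N" for x y
      using that h
      by (simp add: alpha_eq_iff[symmetric] conj_action_closed alpha_conj_action K.m_assoc
          K.inv_mult_cancel_left)
  qed (use conj_action_closed h in blast)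
  have inj: "inj_on (conj_action h) (carrier N)"
  proof (rule inj_onI)
    fix x y assume xy: "x \<in> carrier N" "y \<in> carrier N" "conj_action h x = conj_action h y"
    then have "\<beta> h \<otimes>\<^bsub>Kg\<^esub> \<alpha> x \<otimes>\<^bsub>Kg\<^esub> inv\<^bsub>Kg\<^esub> (\<beta> h) = \<beta> h \<otimes>\<^bsub>Kg\<^esub> \<alpha> y \<otimes>\<^bsub>Kg\<^esub> inv\<^bsub>Kg\<^esub> (\<beta> h)"
      using alpha_conj_action h by metis
    then show "x = y" using h xy by (simp add: alpha_eq_iff)
  qed
  then have "conj_action h ` carrier N = carrier N"
    using conj_action_closed[OF h] finite_N by (simp add: card_image card_subset_eq image_subsetI)
  then show ?thesis
    using hom inj unfolding auto_def Bij_def bij_betw_def conj_action_def by simp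
qed

lemma conj_action_hom: "conj_action \<in> hom H (AutoGroup N)"
proof (rule homI)
  show "conj_action h \<in> carrier (AutoGroup N)" if "h \<in> carrier H" for h
    using conj_action_auto that by (simp add: AutoGroup_def)
  show "conj_action (h1 \<otimes>\<^bsub>H\<^esub> h2) = conj_action h1 \<otimes>\<^bsub>AutoGroup N\<^esub> conj_action h2"
    if h: "h1 \<in> carrier H" "h2 \<in> carrier H" for h1 h2
  proof -
    have "conj_action (h1 \<otimes>\<^bsub>H\<^esub> h2) = compose (carrier N) (conj_action h1) (conj_action h2)"
    proof (rule extensionalityI)
      show "conj_action (h1 \<otimes>\<^bsub>H\<^esub> h2) x = compose (carrier N) (conj_action h1) (conj_action h2) x"
        if x: "x \<in> carrier N" for x
        using h x
        by (simp add: compose_def alpha_eq_iff[symmetric] conj_action_closed alpha_conj_action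
            K.m_assoc K.inv_mult_group)
    qed (simp_all add: conj_action_def compose_def)
    then show ?thesis using conj_action_auto h by (simp add: AutoGroup_def BijGroup_def auto_def)
  qed
qed

definition product_map :: "'n \<times> 'h \<Rightarrow> 'k" where
  "product_map u = \<alpha> (fst u) \<otimes>\<^bsub>Kg\<^esub> \<beta> (snd u)"

lemma carrier_semidirect_prod: "carrier (semidirect_prod N H conj_action) = carrier N \<times> carrier H"
  by (simp add: semidirect_prod_def)

lemma product_map_hom: "product_map \<in> hom (semidirect_prod N H conj_action) Kg"
proof (rule homI)
  fix u w assume "u \<in> carrier (semidirect_prod N H conj_action)" "w \<in> carrier (semidirect_prod N H conj_action)"
  then obtain n1 h1 n2 h2 where u: "u = (n1, h1)" "w = (n2, h2)"
    and c: "n1 \<in> carrier N" "h1 \<in> carrier H" "n2 \<in> carrier N" "h2 \<in> carrier H"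
    by (auto simp: carrier_semidirect_prod)
  show "product_map (u \<otimes>\<^bsub>semidirect_prod N H conj_action\<^esub> w) = product_map u \<otimes>\<^bsub>Kg\<^esub> product_map w"
    using c unfolding product_map_def u
    by (simp add: semidirect_prod_def conj_action_closed alpha_conj_action K.m_assoc
        K.inv_mult_cancel_left)
qed (auto simp: product_map_def carrier_semidirect_prod)

lemma inj_on_product_map: "inj_on product_map (carrier N \<times> carrier H)"
proof (rule inj_onI)
  fix u w assume uw: "u \<in> carrier N \<times> carrier H" "w \<in> carrier N \<times> carrier H"
    "product_map u = product_map w"
  then obtain n1 h1 n2 h2 where u: "u = (n1, h1)" "w = (n2, h2)"
    and c: "n1 \<in> carrier N" "h1 \<in> carrier H" "n2 \<in> carrier N" "h2 \<in> carrier H"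
    by auto
  have "\<alpha> n1 \<otimes>\<^bsub>Kg\<^esub> \<beta> h1 = \<alpha> n2 \<otimes>\<^bsub>Kg\<^esub> \<beta> h2" using uw(3) unfolding product_map_def u by simp
  then have "inv\<^bsub>Kg\<^esub> (\<alpha> n2) \<otimes>\<^bsub>Kg\<^esub> (\<alpha> n1 \<otimes>\<^bsub>Kg\<^esub> \<beta> h1) \<otimes>\<^bsub>Kg\<^esub> inv\<^bsub>Kg\<^esub> (\<beta> h1)
      = inv\<^bsub>Kg\<^esub> (\<alpha> n2) \<otimes>\<^bsub>Kg\<^esub> (\<alpha> n2 \<otimes>\<^bsub>Kg\<^esub> \<beta> h2) \<otimes>\<^bsub>Kg\<^esub> inv\<^bsub>Kg\<^esub> (\<beta> h1)"
    by simp
  then have "\<alpha> (inv\<^bsub>N\<^esub> n2 \<otimes>\<^bsub>N\<^esub> n1) = \<beta> (h2 \<otimes>\<^bsub>H\<^esub> inv\<^bsub>H\<^esub> h1)"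
    using c by (simp add: K.m_assoc K.inv_mult_cancel_left)
  then have "\<alpha> (inv\<^bsub>N\<^esub> n2 \<otimes>\<^bsub>N\<^esub> n1) = \<one>\<^bsub>Kg\<^esub>" and "\<beta> (h2 \<otimes>\<^bsub>H\<^esub> inv\<^bsub>H\<^esub> h1) = \<one>\<^bsub>Kg\<^esub>"
    using trivial_intersection[of "inv\<^bsub>N\<^esub> n2 \<otimes>\<^bsub>N\<^esub> n1" "h2 \<otimes>\<^bsub>H\<^esub> inv\<^bsub>H\<^esub> h1"] c by auto
  then have "inv\<^bsub>N\<^esub> n2 \<otimes>\<^bsub>N\<^esub> n1 = \<one>\<^bsub>N\<^esub>" and "h2 \<otimes>\<^bsub>H\<^esub> inv\<^bsub>H\<^esub> h1 = \<one>\<^bsub>H\<^esub>"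
    using alpha_inj beta_inj c by (simp_all add: inj_on_def)
  then have "n1 = n2" and "h1 = h2"
    using c by (metis N.inv_closed N.inv_equality N.inv_inv, metis H.inv_closed H.inv_equality H.inv_inv)
  then show "u = w" using u by simp
qed

lemma product_map_image: "product_map ` (carrier N \<times> carrier H) = carrier Kg"
proof (rule card_subset_eq)
  have "card (carrier N) > 0" "card (carrier H) > 0"
    using finite_N finite_H N.one_closed H.one_closed card_gt_0_iff by blast+
  then show "finite (carrier Kg)" using card_eq card_gt_0_iff by fastforce
  show "product_map ` (carrier N \<times> carrier H) \<subseteq> carrier Kg"
    using product_map_hom by (auto simp: hom_def carrier_semidirect_prod)
  show "card (product_map ` (carrier N \<times> carrier H)) = card (carrier Kg)"
    using inj_on_product_map card_eq by (simp add: card_image card_cartesian_product)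
qed

theorem is_semidirect_of: "is_semidirect_of Kg N H"
proof -
  have "bij_betw product_map (carrier (semidirect_prod N H conj_action)) (carrier Kg)"
    using inj_on_product_map product_map_image by (simp add: bij_betw_def carrier_semidirect_prod)
  then have "inv_into (carrier (semidirect_prod N H conj_action)) product_map
      \<in> iso Kg (semidirect_prod N H conj_action)"
    using conj_action_closed
    by (intro bij_hom_inv_into_iso[OF product_map_hom]) (auto simp: semidirect_prod_def)
  then show ?thesis
    unfolding is_semidirect_of_def using conj_action_hom is_isoI by blast
qed

end

section \<open>Dihedral groups\<close>

lemma carrier_dihedral_group: "carrier (dihedral_group m) = {0..<int m} \<times> (UNIV :: bool set)"
  by (simp add: dihedral_group_def)

lemma mult_dihedral_group:
  "(a, e) \<otimes>\<^bsub>dihedral_group m\<^esub> (b, f) = ((a + (if e then - b else b)) mod int m, e \<noteq> f)"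
  by (simp add: dihedral_group_def)

lemma one_dihedral_group: "\<one>\<^bsub>dihedral_group m\<^esub> = (0, False)"
  by (simp add: dihedral_group_def)

lemma card_dihedral_group: "card (carrier (dihedral_group m)) = 2 * m"
  by (simp add: carrier_dihedral_group card_cartesian_product)

lemma group_dihedral_group:
  assumes "0 < m"
  shows "group (dihedral_group m)"
proof (rule groupI)
  show "x \<otimes>\<^bsub>dihedral_group m\<^esub> y \<in> carrier (dihedral_group m)"
    if "x \<in> carrier (dihedral_group m)" "y \<in> carrier (dihedral_group m)" for x y
    using assms by (cases x, cases y) (simp add: mult_dihedral_group carrier_dihedral_group)
  show "\<one>\<^bsub>dihedral_group m\<^esub> \<in> carrier (dihedral_group m)"
    using assms by (simp add: one_dihedral_group carrier_dihedral_group)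
  show "x \<otimes>\<^bsub>dihedral_group m\<^esub> y \<otimes>\<^bsub>dihedral_group m\<^esub> z
      = x \<otimes>\<^bsub>dihedral_group m\<^esub> (y \<otimes>\<^bsub>dihedral_group m\<^esub> z)" for x y z
    by (cases x, cases y, cases z)
      (simp add: mult_dihedral_group mod_add_left_eq mod_add_right_eq mod_diff_right_eq
        mod_diff_left_eq algebra_simps)
  show "\<one>\<^bsub>dihedral_group m\<^esub> \<otimes>\<^bsub>dihedral_group m\<^esub> x = x"
    if "x \<in> carrier (dihedral_group m)" for x
    using that by (cases x) (simp add: mult_dihedral_group one_dihedral_group carrier_dihedral_group)
  show "\<exists>y\<in>carrier (dihedral_group m). y \<otimes>\<^bsub>dihedral_group m\<^esub> x = \<one>\<^bsub>dihedral_group m\<^esub>"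
    if "x \<in> carrier (dihedral_group m)" for x
  proof (cases x)
    case (Pair a e)
    let ?y = "(if e then a else (- a) mod int m, e)"
    have "?y \<in> carrier (dihedral_group m)" "?y \<otimes>\<^bsub>dihedral_group m\<^esub> x = \<one>\<^bsub>dihedral_group m\<^esub>"
      using that assms Pair
      by (auto simp: mult_dihedral_group one_dihedral_group carrier_dihedral_group mod_add_left_eq)
    then show ?thesis by blast
  qed
qed

lemma dihedral_group_pow_rotation:
  "(a, False) [^]\<^bsub>dihedral_group m\<^esub> (k::nat) = ((int k * a) mod int m, False)"
proof (induction k)
  case (Suc k)
  then show ?case
    by (simp add: nat_pow_def mult_dihedral_group mod_add_right_eq algebra_simps)
qed (simp add: one_dihedral_group)

lemma dihedral_group_pow_reflection:
  "(a, True) [^]\<^bsub>dihedral_group m\<^esub> (k::nat)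
    = (if even k then (0, False) else (a mod int m, True))"
proof (induction k)
  case (Suc k)
  then show ?case by (simp add: nat_pow_def mult_dihedral_group mod_diff_left_eq)
qed (simp add: one_dihedral_group)

text \<open>The subgroup of \<open>D\<^sub>4\<^sub>k\<close> generated by the reflection \<open>(0, True)\<close> and the rotation
  \<open>(k, False)\<close> of order 2 is a copy of \<open>D\<^sub>4\<close>.\<close>

lemma dihedral_group_mult_scaled:
  assumes "i \<in> {0, 1}" "j \<in> {0, 1}"
  shows "(int k * i, e) \<otimes>\<^bsub>dihedral_group (2 * k)\<^esub> (int k * j, f)
    = (int k * fst ((i, e) \<otimes>\<^bsub>dihedral_group 2\<^esub> (j, f)), snd ((i, e) \<otimes>\<^bsub>dihedral_group 2\<^esub> (j, f)))"
  using assms by (auto simp: mult_dihedral_group mod_mult_mult1[symmetric] algebra_simps)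

lemma card_p_torsion_rotations_le:
  assumes "0 < m" and "Factorial_Ring.prime (p::nat)"
  shows "card {a::int. 0 \<le> a \<and> a < int m \<and> int m dvd int p * a} \<le> p"
proof (cases "p dvd m")
  case True
  then obtain d where d: "m = p * d" by blast
  have "{a::int. 0 \<le> a \<and> a < int m \<and> int m dvd int p * a} \<subseteq> (\<lambda>i. int d * int i) ` {..<p}"
  proof
    fix a assume a: "a \<in> {a::int. 0 \<le> a \<and> a < int m \<and> int m dvd int p * a}"
    have "int d dvd a" using a d prime_gt_0_nat[OF assms(2)] by simp
    then obtain j where j: "a = int d * j" by blast
    have "d > 0" using d assms(1) by (simp add: gr0I)
    then have "0 \<le> j" "j < int p" using a j d by (auto simp: zero_le_mult_iff mult.commute)
    then show "a \<in> (\<lambda>i. int d * int i) ` {..<p}"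
      using j by (intro image_eqI[of _ _ "nat j"]) auto
  qed
  then have "card {a::int. 0 \<le> a \<and> a < int m \<and> int m dvd int p * a}
      \<le> card ((\<lambda>i. int d * int i) ` {..<p})"
    by (intro card_mono) simp_all
  also have "\<dots> \<le> p" using card_image_le[of "{..<p}"] by simp
  finally show ?thesis .
next
  case False
  then have "coprime (int m) (int p)"
    using assms(2) by (metis coprime_commute coprime_int_iff prime_imp_coprime)
  then have "{a::int. 0 \<le> a \<and> a < int m \<and> int m dvd int p * a} \<subseteq> {0}"
    by (auto simp: coprime_dvd_mult_right_iff) (metis dvd_eq_mod_eq_0 mod_pos_pos_trivial)
  then have "card {a::int. 0 \<le> a \<and> a < int m \<and> int m dvd int p * a} \<le> card {0::int}"
    by (intro card_mono) simp_all
  then show ?thesis using prime_gt_0_nat[OF assms(2)] by simp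
qed

section \<open>The kernel of an imprimitive group on a block system\<close>

locale imprimitive_kernel =
  fixes p m :: nat and \<Omega> :: "'a set" and G :: "('a \<Rightarrow> 'a) set"
    and \<B> :: "'a set set" and B :: "'a set" and v :: 'a
  assumes prime_p: "Factorial_Ring.prime p" and p_ge_3: "p \<ge> 3"
    and finite_\<Omega>: "finite \<Omega>"
    and subgroup_G: "subgroup G (BijGroup \<Omega>)"
    and transitive_G: "transitive_on \<Omega> G"
    and block_system: "block_system \<Omega> G \<B>" and card_block: "\<forall>C\<in>\<B>. card C = p"
    and B_block: "B \<in> \<B>" and v_in_B: "v \<in> B"
    and K0_nontrivial: "pointwise_kernel (block_kernel G \<B>) B \<noteq> {\<one>\<^bsub>BijGroup \<Omega>\<^esub>}"
    and Kv_dihedral: "perm_group \<Omega> (point_stabilizer (block_kernel G \<B>) v) \<cong> dihedral_group m"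
begin

abbreviation "S \<equiv> BijGroup \<Omega>"
abbreviation "K \<equiv> block_kernel G \<B>"
abbreviation "K0 \<equiv> pointwise_kernel K B"
abbreviation "Kv \<equiv> point_stabilizer K v"

sublocale S: group S by (rule group_BijGroup)

lemma p_pos: "p > 0" using prime_gt_0_nat[OF prime_p] .

lemma odd_p: "odd p" using prime_odd_nat[OF prime_p] p_ge_3 by simp

lemma G_Bij: "g \<in> G \<Longrightarrow> g \<in> Bij \<Omega>"
  using subgroup.subset[OF subgroup_G] by auto

lemma block_subset: "C \<in> \<B> \<Longrightarrow> C \<subseteq> \<Omega>"
  using block_system partition_onD1 unfolding block_system_def by blast

lemma block_exists: "x \<in> \<Omega> \<Longrightarrow> \<exists>C\<in>\<B>. x \<in> C"
  using block_system partition_onD1 unfolding block_system_def by blast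

lemma block_unique: "C1 \<in> \<B> \<Longrightarrow> C2 \<in> \<B> \<Longrightarrow> x \<in> C1 \<Longrightarrow> x \<in> C2 \<Longrightarrow> C1 = C2"
  using block_system partition_onD2 unfolding block_system_def disjoint_def by blast

lemma block_image: "g \<in> G \<Longrightarrow> C \<in> \<B> \<Longrightarrow> g ` C \<in> \<B>"
  using block_system unfolding block_system_def by blast

lemma block_nonempty: "C \<in> \<B> \<Longrightarrow> C \<noteq> {}"
  using card_block prime_p by (metis card.empty not_prime_0)

lemma G_transitive_on_blocks:
  assumes "C0 \<in> \<B>" "C \<in> \<B>"
  shows "\<exists>g\<in>G. g ` C0 = C"
proof -
  obtain u c where u: "u \<in> C0" and c: "c \<in> C" using block_nonempty assms by blast
  have "u \<in> \<Omega>" "c \<in> \<Omega>" using u c assms block_subset by auto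
  then obtain g where g: "g \<in> G" "g u = c" using transitive_G unfolding transitive_on_def by blast
  then have "c \<in> g ` C0" using u by blast
  then have "g ` C0 = C" using block_unique[OF block_image[OF g(1) assms(1)] assms(2)] c by blast
  then show ?thesis using g(1) by blast
qed

lemma v_in_\<Omega>: "v \<in> \<Omega>" using v_in_B block_subset[OF B_block] by blast

lemma K_subset_G: "K \<subseteq> G" unfolding block_kernel_def by blast
lemma K_Bij: "k \<in> K \<Longrightarrow> k \<in> Bij \<Omega>" using K_subset_G G_Bij by blast
lemma K_image_block: "k \<in> K \<Longrightarrow> C \<in> \<B> \<Longrightarrow> k ` C = C" unfolding block_kernel_def by blast
lemma K_maps_block: "k \<in> K \<Longrightarrow> C \<in> \<B> \<Longrightarrow> x \<in> C \<Longrightarrow> k x \<in> C" using K_image_block by blast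

lemma subgroup_K: "subgroup K S"
proof (rule S.subgroupI)
  show "K \<subseteq> carrier S" using K_Bij by auto
  have "\<one>\<^bsub>S\<^esub> ` C = C" if "C \<in> \<B>" for C
    using block_subset[OF that] by (auto simp: BijGroup_one_apply subset_iff)
  then show "K \<noteq> {}"
    unfolding block_kernel_def using subgroup.one_closed[OF subgroup_G] by blast
  show "inv\<^bsub>S\<^esub> a \<in> K" if a: "a \<in> K" for a
  proof -
    have "(inv\<^bsub>S\<^esub> a) ` C = C" if "C \<in> \<B>" for C
      using BijGroup_image_inv(2)[OF K_Bij[OF a] block_subset[OF that] K_image_block[OF a that]] .
    moreover have "inv\<^bsub>S\<^esub> a \<in> G" using a K_subset_G subgroup.m_inv_closed[OF subgroup_G] by blast
    ultimately show ?thesis unfolding block_kernel_def by blast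
  qed
  show "a \<otimes>\<^bsub>S\<^esub> b \<in> K" if ab: "a \<in> K" "b \<in> K" for a b
  proof -
    have "(a \<otimes>\<^bsub>S\<^esub> b) ` C = C" if "C \<in> \<B>" for C
      using BijGroup_image_mult[OF K_Bij[OF ab(1)] K_Bij[OF ab(2)] block_subset[OF that]]
        K_image_block[OF ab(1) that] K_image_block[OF ab(2) that] by simp
    moreover have "a \<otimes>\<^bsub>S\<^esub> b \<in> G" using ab K_subset_G subgroup.m_closed[OF subgroup_G] by blast
    ultimately show ?thesis unfolding block_kernel_def by blast
  qed
qed

lemma K_mult: "a \<in> K \<Longrightarrow> b \<in> K \<Longrightarrow> a \<otimes>\<^bsub>S\<^esub> b \<in> K" by (rule subgroup.m_closed[OF subgroup_K])
lemma K_inv: "a \<in> K \<Longrightarrow> inv\<^bsub>S\<^esub> a \<in> K" by (rule subgroup.m_inv_closed[OF subgroup_K])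
lemma K_pow: "a \<in> K \<Longrightarrow> a [^]\<^bsub>S\<^esub> (i::nat) \<in> K" by (rule S.subgroup_nat_pow_closed[OF subgroup_K])

lemma K_normal: "g \<in> G \<Longrightarrow> k \<in> K \<Longrightarrow> g \<otimes>\<^bsub>S\<^esub> k \<otimes>\<^bsub>S\<^esub> inv\<^bsub>S\<^esub> g \<in> K"
proof -
  assume gk: "g \<in> G" "k \<in> K"
  have gB: "g \<in> Bij \<Omega>" and kB: "k \<in> Bij \<Omega>" using gk G_Bij K_Bij by auto
  have "(g \<otimes>\<^bsub>S\<^esub> k \<otimes>\<^bsub>S\<^esub> inv\<^bsub>S\<^esub> g) ` C = C" if C: "C \<in> \<B>" for C
  proof -
    have C1: "(inv\<^bsub>S\<^esub> g) ` C \<in> \<B>"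
      using block_image[OF subgroup.m_inv_closed[OF subgroup_G gk(1)] C] .
    have "(g \<otimes>\<^bsub>S\<^esub> k \<otimes>\<^bsub>S\<^esub> inv\<^bsub>S\<^esub> g) ` C = g ` k ` (inv\<^bsub>S\<^esub> g) ` C"
      using gB kB block_subset[OF C] block_subset[OF C1] by (simp add: BijGroup_image_mult)
    also have "\<dots> = C"
      using K_image_block[OF gk(2) C1] BijGroup_image_inv(1)[OF gB block_subset[OF C]] by simp
    finally show ?thesis .
  qed
  moreover have "g \<otimes>\<^bsub>S\<^esub> k \<otimes>\<^bsub>S\<^esub> inv\<^bsub>S\<^esub> g \<in> G"
    using gk K_subset_G subgroup.m_closed[OF subgroup_G] subgroup.m_inv_closed[OF subgroup_G] by blast
  ultimately show ?thesis unfolding block_kernel_def by blast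
qed

lemma K0_subset_K: "K0 \<subseteq> K" unfolding pointwise_kernel_def by blast
lemma K0_subset_Kv: "K0 \<subseteq> Kv"
  unfolding pointwise_kernel_def point_stabilizer_def using v_in_B by blast
lemma Kv_subset_K: "Kv \<subseteq> K" unfolding point_stabilizer_def by blast
lemma K0_fixes_v: "x \<in> K0 \<Longrightarrow> x v = v" using v_in_B unfolding pointwise_kernel_def by blast

lemma subgroup_K0: "subgroup K0 S"
proof (rule S.subgroupI)
  show "K0 \<subseteq> carrier S" using K0_subset_K K_Bij by auto
  have "\<one>\<^bsub>S\<^esub> \<in> K0"
    using subgroup.one_closed[OF subgroup_K] block_subset[OF B_block]
    unfolding pointwise_kernel_def by (auto simp: BijGroup_one_apply)
  then show "K0 \<noteq> {}" by blast
  show "inv\<^bsub>S\<^esub> a \<in> K0" if "a \<in> K0" for a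
  proof -
    have a: "a \<in> K" "\<forall>x\<in>B. a x = x" using that unfolding pointwise_kernel_def by auto
    have "(inv\<^bsub>S\<^esub> a) x = x" if "x \<in> B" for x
      using BijGroup_inv_apply[OF K_Bij[OF a(1)], of x] a(2) that block_subset[OF B_block] by auto
    then show ?thesis using K_inv a unfolding pointwise_kernel_def by blast
  qed
  show "a \<otimes>\<^bsub>S\<^esub> b \<in> K0" if "a \<in> K0" "b \<in> K0" for a b
    using that K_mult K_Bij block_subset[OF B_block] unfolding pointwise_kernel_def
    by (auto simp: BijGroup_mult_apply subsetD)
qed

lemma subgroup_Kv: "subgroup Kv S"
proof (rule S.subgroupI)
  show "Kv \<subseteq> carrier S" using Kv_subset_K K_Bij by auto
  show "Kv \<noteq> {}"
    using subgroup.one_closed[OF subgroup_K] v_in_\<Omega>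
    unfolding point_stabilizer_def by (auto simp: BijGroup_one_apply)
  show "inv\<^bsub>S\<^esub> a \<in> Kv" if "a \<in> Kv" for a
  proof -
    have a: "a \<in> K" "a v = v" using that unfolding point_stabilizer_def by auto
    have "(inv\<^bsub>S\<^esub> a) v = v" using BijGroup_inv_apply[OF K_Bij[OF a(1)] v_in_\<Omega>] a(2) by simp
    then show ?thesis using K_inv a unfolding point_stabilizer_def by blast
  qed
  show "a \<otimes>\<^bsub>S\<^esub> b \<in> Kv" if "a \<in> Kv" "b \<in> Kv" for a b
    using that K_mult K_Bij v_in_\<Omega> unfolding point_stabilizer_def by (auto simp: BijGroup_mult_apply)
qed

lemma K0_normal: "k \<in> K \<Longrightarrow> a \<in> K0 \<Longrightarrow> k \<otimes>\<^bsub>S\<^esub> a \<otimes>\<^bsub>S\<^esub> inv\<^bsub>S\<^esub> k \<in> K0"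
proof -
  assume ka: "k \<in> K" "a \<in> K0"
  have a: "a \<in> K" "\<forall>x\<in>B. a x = x" using ka unfolding pointwise_kernel_def by auto
  have "(k \<otimes>\<^bsub>S\<^esub> a \<otimes>\<^bsub>S\<^esub> inv\<^bsub>S\<^esub> k) x = x" if x: "x \<in> B" for x
  proof -
    have x\<Omega>: "x \<in> \<Omega>" using x block_subset[OF B_block] by auto
    have "a ((inv\<^bsub>S\<^esub> k) x) = (inv\<^bsub>S\<^esub> k) x" using a K_maps_block[OF K_inv[OF ka(1)] B_block x] by blast
    then show ?thesis
      using BijGroup_conj_apply[OF K_Bij[OF ka(1)] K_Bij[OF a(1)] x\<Omega>]
        BijGroup_apply_inv[OF K_Bij[OF ka(1)] x\<Omega>] by simp
  qed
  moreover have "k \<otimes>\<^bsub>S\<^esub> a \<otimes>\<^bsub>S\<^esub> inv\<^bsub>S\<^esub> k \<in> K" using ka a K_mult K_inv by blast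
  ultimately show ?thesis unfolding pointwise_kernel_def by blast
qed

lemma finite_K: "finite K"
  using finite_subset[OF _ finite_Bij[OF finite_\<Omega>]] K_Bij by blast

lemma finite_K0: "finite K0" using finite_subset[OF K0_subset_K finite_K] .

lemma K0_moves_point: "\<exists>k0 u. k0 \<in> K0 \<and> u \<in> \<Omega> \<and> k0 u \<noteq> u"
proof -
  obtain k0 where k0: "k0 \<in> K0" "k0 \<noteq> \<one>\<^bsub>S\<^esub>"
    using K0_nontrivial subgroup.one_closed[OF subgroup_K0] by blast
  have "\<not> (\<forall>x\<in>\<Omega>. k0 x = x)"
    using BijGroup_eq_oneI[OF K_Bij] K0_subset_K k0 by blast
  then show ?thesis using k0 by blast
qed

lemma K_transitive_on_block: "C \<in> \<B> \<Longrightarrow> \<forall>x\<in>C. \<forall>y\<in>C. \<exists>k\<in>K. k x = y"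
proof -
  assume C: "C \<in> \<B>"
  obtain k0 u where "k0 \<in> K0" "u \<in> \<Omega>" "k0 u \<noteq> u" using K0_moves_point by blast
  then show ?thesis
  proof (intro normal_subgroup_transitive_on_prime_block[OF finite_\<Omega> subgroup_G subgroup_K])
    show "\<forall>h\<in>G. \<forall>n\<in>K. h \<otimes>\<^bsub>S\<^esub> n \<otimes>\<^bsub>S\<^esub> inv\<^bsub>S\<^esub> h \<in> K" using K_normal by blast
    show "\<forall>x\<in>\<Omega>. \<forall>y\<in>\<Omega>. \<exists>h\<in>G. h x = y" using transitive_G unfolding transitive_on_def .
    show "C \<subseteq> \<Omega>" using block_subset[OF C] .
    show "\<forall>n\<in>K. \<forall>x\<in>C. n x \<in> C" using K_maps_block C by blast
    show "Factorial_Ring.prime (card C)" using card_block C prime_p by simp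
  qed (use K0_subset_K in auto)
qed

lemma K0_transitive_on_some_block: "\<exists>C\<in>\<B>. \<forall>x\<in>C. \<forall>y\<in>C. \<exists>k\<in>K0. k x = y"
proof -
  obtain k0 u where ku: "k0 \<in> K0" "u \<in> \<Omega>" "k0 u \<noteq> u" using K0_moves_point by blast
  obtain C where C: "C \<in> \<B>" "u \<in> C" using block_exists[OF ku(2)] by blast
  have "\<forall>x\<in>C. \<forall>y\<in>C. \<exists>k\<in>K0. k x = y"
  proof (rule normal_subgroup_transitive_on_prime_block[OF finite_\<Omega> subgroup_K subgroup_K0])
    show "\<forall>h\<in>K. \<forall>n\<in>K0. h \<otimes>\<^bsub>S\<^esub> n \<otimes>\<^bsub>S\<^esub> inv\<^bsub>S\<^esub> h \<in> K0" using K0_normal by blast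
    show "\<forall>x\<in>C. \<forall>y\<in>C. \<exists>h\<in>K. h x = y" using K_transitive_on_block[OF C(1)] .
    show "C \<subseteq> \<Omega>" using block_subset[OF C(1)] .
    show "\<forall>n\<in>K0. \<forall>x\<in>C. n x \<in> C" using K_maps_block C(1) K0_subset_K by blast
    show "Factorial_Ring.prime (card C)" using card_block C(1) prime_p by simp
  qed (use ku C in auto)
  then show ?thesis using C by blast
qed

lemma prime_dvd_card_K0: "p dvd card K0"
proof -
  obtain C where C: "C \<in> \<B>" "\<forall>x\<in>C. \<forall>y\<in>C. \<exists>k\<in>K0. k x = y"
    using K0_transitive_on_some_block by blast
  obtain x where x: "x \<in> C" using block_nonempty[OF C(1)] by blast
  have "perm_orbit K0 x = C"
  proof
    show "perm_orbit K0 x \<subseteq> C"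
      using K_maps_block[OF _ C(1) x] K0_subset_K unfolding perm_orbit_def by blast
    show "C \<subseteq> perm_orbit K0 x"
    proof
      fix y assume "y \<in> C"
      then obtain k where "k \<in> K0" "k x = y" using C(2) x by blast
      then show "y \<in> perm_orbit K0 x" unfolding perm_orbit_def by blast
    qed
  qed
  moreover have "x \<in> \<Omega>" using x block_subset[OF C(1)] by blast
  ultimately have "card C * card {g \<in> K0. g x = x} = card K0"
    using card_perm_orbit_mult_card_stabilizer[OF finite_\<Omega> subgroup_K0, of x] by simp
  moreover have "card C = p" using card_block C(1) by blast
  ultimately have "card K0 = p * card {g \<in> K0. g x = x}" by simp
  then show ?thesis by (rule dvdI)
qed

lemma K0_has_element_of_order_p: "\<exists>q. q \<in> K0 \<and> q \<noteq> \<one>\<^bsub>S\<^esub> \<and> q [^]\<^bsub>S\<^esub> p = \<one>\<^bsub>S\<^esub>"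
proof -
  let ?H = "S\<lparr>carrier := K0\<rparr>"
  obtain c where "card K0 = p * c" using prime_dvd_card_K0 by blast
  then have "order ?H = p ^ 1 * c" by (simp add: order_def)
  then have "\<exists>P. subgroup P ?H \<and> card P = p ^ 1"
    by (rule sylow_thm[OF prime_p S.subgroup_imp_group[OF subgroup_K0]]) (simp add: finite_K0)
  then obtain P where P: "subgroup P ?H" "card P = p ^ 1" by blast
  have PS: "subgroup P S" by (rule S.incl_subgroup[OF subgroup_K0 P(1)])
  have PK0: "P \<subseteq> K0" using subgroup.subset[OF P(1)] by simp
  have "\<not> P \<subseteq> {\<one>\<^bsub>S\<^esub>}"
  proof
    assume "P \<subseteq> {\<one>\<^bsub>S\<^esub>}"
    then have "card P \<le> 1" using card_mono[of "{\<one>\<^bsub>S\<^esub>}" P] by simp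
    then show False using P(2) p_ge_3 by simp
  qed
  then obtain q where q: "q \<in> P" "q \<noteq> \<one>\<^bsub>S\<^esub>" by blast
  interpret P: group "S\<lparr>carrier := P\<rparr>" by (rule S.subgroup_imp_group[OF PS])
  have "q [^]\<^bsub>S\<lparr>carrier := P\<rparr>\<^esub> order (S\<lparr>carrier := P\<rparr>) = \<one>\<^bsub>S\<lparr>carrier := P\<rparr>\<^esub>"
    using P.pow_order_eq_1 q(1) finite_subset[OF PK0 finite_K0] by (simp add: order_def)
  then have "q [^]\<^bsub>S\<^esub> p = \<one>\<^bsub>S\<^esub>"
    using P(2) by (simp add: order_def) (metis S.nat_pow_consistent)
  then show ?thesis using q PK0 by blast
qed

abbreviation "D \<equiv> dihedral_group m"

lemma perm_group_Kv: "perm_group \<Omega> Kv = S\<lparr>carrier := Kv\<rparr>" by (simp add: perm_group_def)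

lemma group_perm_group_Kv: "group (perm_group \<Omega> Kv)"
  using S.subgroup_imp_group[OF subgroup_Kv] by (simp add: perm_group_Kv)

definition phi :: "('a \<Rightarrow> 'a) \<Rightarrow> int \<times> bool" where
  "phi = (SOME f. f \<in> iso (perm_group \<Omega> Kv) D)"

definition psi :: "int \<times> bool \<Rightarrow> 'a \<Rightarrow> 'a" where
  "psi = inv_into Kv phi"

lemma phi_iso: "phi \<in> iso (perm_group \<Omega> Kv) D"
proof -
  have "\<exists>f. f \<in> iso (perm_group \<Omega> Kv) D" using Kv_dihedral unfolding is_iso_def by blast
  then show ?thesis unfolding phi_def by (rule someI_ex)
qed

lemma phi_mult: "x \<in> Kv \<Longrightarrow> y \<in> Kv \<Longrightarrow> phi (x \<otimes>\<^bsub>S\<^esub> y) = phi x \<otimes>\<^bsub>D\<^esub> phi y"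
  using phi_iso unfolding iso_def hom_def by (simp add: perm_group_Kv)

lemma phi_inj: "inj_on phi Kv"
  using phi_iso by (simp add: iso_def bij_betw_def perm_group_Kv)

lemma phi_image: "phi ` Kv = carrier D"
  using phi_iso by (simp add: iso_def bij_betw_def perm_group_Kv)

lemma phi_closed: "x \<in> Kv \<Longrightarrow> phi x \<in> carrier D" using phi_image by blast

lemma m_pos: "m > 0"
  using phi_closed[OF subgroup.one_closed[OF subgroup_Kv]]
  by (cases "phi \<one>\<^bsub>S\<^esub>") (auto simp: carrier_dihedral_group)

lemma group_D: "group D" using group_dihedral_group[OF m_pos] .

lemma phi_one: "phi \<one>\<^bsub>S\<^esub> = (0, False)"
  using group_hom.hom_one[of "perm_group \<Omega> Kv" D phi] phi_iso group_perm_group_Kv group_D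
  by (simp add: group_hom_def group_hom_axioms_def iso_def perm_group_Kv one_dihedral_group)

lemma phi_pow: "x \<in> Kv \<Longrightarrow> phi (x [^]\<^bsub>S\<^esub> (k::nat)) = phi x [^]\<^bsub>D\<^esub> k"
  using hom_nat_pow[of phi "perm_group \<Omega> Kv" D x k] phi_iso group_perm_group_Kv group_D
    S.nat_pow_consistent[where H = Kv]
  by (simp add: iso_def perm_group_Kv)

lemma card_Kv: "card Kv = 2 * m"
proof -
  have "card (phi ` Kv) = card Kv" using phi_inj by (simp add: card_image)
  then show ?thesis using phi_image card_dihedral_group by simp
qed

lemma psi_closed: "a \<in> carrier D \<Longrightarrow> psi a \<in> Kv"
  unfolding psi_def using phi_image by (metis inv_into_into)

lemma phi_psi: "a \<in> carrier D \<Longrightarrow> phi (psi a) = a"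
  unfolding psi_def using phi_image by (metis f_inv_into_f)

lemma psi_mult: "a \<in> carrier D \<Longrightarrow> b \<in> carrier D \<Longrightarrow> psi (a \<otimes>\<^bsub>D\<^esub> b) = psi a \<otimes>\<^bsub>S\<^esub> psi b"
proof -
  assume ab: "a \<in> carrier D" "b \<in> carrier D"
  have "psi a \<otimes>\<^bsub>S\<^esub> psi b \<in> Kv" using subgroup.m_closed[OF subgroup_Kv] psi_closed ab by blast
  moreover have "phi (psi a \<otimes>\<^bsub>S\<^esub> psi b) = a \<otimes>\<^bsub>D\<^esub> b" using phi_mult psi_closed phi_psi ab by simp
  ultimately show ?thesis using inv_into_f_f[OF phi_inj] unfolding psi_def by metis
qed

lemma psi_one: "psi (0, False) = \<one>\<^bsub>S\<^esub>"
  unfolding psi_def using inv_into_f_f[OF phi_inj subgroup.one_closed[OF subgroup_Kv]] phi_one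
  by simp

lemma Kv_Bij: "x \<in> Kv \<Longrightarrow> x \<in> Bij \<Omega>" using Kv_subset_K K_Bij by blast

text \<open>Since \<open>p\<close> is odd, an element of order \<open>p\<close> of \<open>D\<^sub>2\<^sub>m\<close> is a rotation.\<close>

lemma phi_rotation_if_pow_p_eq_one:
  assumes "x \<in> Kv" "x [^]\<^bsub>S\<^esub> p = \<one>\<^bsub>S\<^esub>"
  shows "\<exists>a. phi x = (a, False) \<and> 0 \<le> a \<and> a < int m \<and> int m dvd int p * a"
proof -
  obtain a e where ae: "phi x = (a, e)" by fastforce
  have a: "0 \<le> a" "a < int m" using phi_closed[OF assms(1)] ae by (auto simp: carrier_dihedral_group)
  have pow: "(a, e) [^]\<^bsub>D\<^esub> p = (0, False)" using phi_pow[OF assms(1), of p] assms(2) ae phi_one by simp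
  then have "e = False" using odd_p by (cases e) (simp_all add: dihedral_group_pow_reflection)
  then have "int m dvd int p * a" using pow by (simp add: dihedral_group_pow_rotation dvd_eq_mod_eq_0)
  then show ?thesis using ae a \<open>e = False\<close> by blast
qed

section \<open>The elements of order \<open>p\<close> of \<open>K\<^sub>0\<close>\<close>

definition Tp :: "('a \<Rightarrow> 'a) set" where
  "Tp = {x \<in> K0. x [^]\<^bsub>S\<^esub> p = \<one>\<^bsub>S\<^esub>}"

lemma card_Tp_le: "card Tp \<le> p"
proof -
  let ?R = "{a::int. 0 \<le> a \<and> a < int m \<and> int m dvd int p * a}"
  have finite_R: "finite ?R" by (rule finite_subset[of _ "{0..<int m}"]) auto
  have "Tp \<subseteq> Kv" using K0_subset_Kv unfolding Tp_def by auto
  then have "card Tp = card (phi ` Tp)" using inj_on_subset[OF phi_inj] by (simp add: card_image)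
  also have "\<dots> \<le> card ((\<lambda>a. (a, False)) ` ?R)"
  proof (rule card_mono)
    show "finite ((\<lambda>a. (a, False)) ` ?R)" using finite_R by blast
    show "phi ` Tp \<subseteq> (\<lambda>a. (a, False)) ` ?R"
    proof
      fix z assume "z \<in> phi ` Tp"
      then obtain x where "x \<in> Tp" "z = phi x" by blast
      then show "z \<in> (\<lambda>a. (a, False)) ` ?R"
        using phi_rotation_if_pow_p_eq_one[of x] K0_subset_Kv unfolding Tp_def by auto
    qed
  qed
  also have "\<dots> \<le> card ?R" by (rule card_image_le[OF finite_R])
  also have "\<dots> \<le> p" by (rule card_p_torsion_rotations_le[OF m_pos prime_p])
  finally show ?thesis .
qed

definition q :: "'a \<Rightarrow> 'a" where
  "q = (SOME q. q \<in> K0 \<and> q \<noteq> \<one>\<^bsub>S\<^esub> \<and> q [^]\<^bsub>S\<^esub> p = \<one>\<^bsub>S\<^esub>)"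

lemma q_in_K0: "q \<in> K0" and q_ne_one: "q \<noteq> \<one>\<^bsub>S\<^esub>" and q_pow_p: "q [^]\<^bsub>S\<^esub> p = \<one>\<^bsub>S\<^esub>"
  using someI_ex[OF K0_has_element_of_order_p] unfolding q_def by blast+

lemma q_Bij: "q \<in> Bij \<Omega>" using q_in_K0 K0_subset_K K_Bij by blast

lemma q_pow_mod: "q [^]\<^bsub>S\<^esub> (i mod p) = q [^]\<^bsub>S\<^esub> (i::nat)"
  using S.nat_pow_mod_eq q_Bij q_pow_p by simp

lemma Tp_subset_K0: "Tp \<subseteq> K0" unfolding Tp_def by auto

lemma Tp_eq: "Tp = (\<lambda>i. q [^]\<^bsub>S\<^esub> i) ` {..<p}"
proof -
  have inj: "inj_on (\<lambda>i. q [^]\<^bsub>S\<^esub> i) {..<p}"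
    using S.inj_on_nat_pow_prime q_Bij q_ne_one q_pow_p prime_p by simp
  have sub: "(\<lambda>i. q [^]\<^bsub>S\<^esub> i) ` {..<p} \<subseteq> Tp"
  proof
    fix z assume "z \<in> (\<lambda>i. q [^]\<^bsub>S\<^esub> i) ` {..<p}"
    then obtain i :: nat where z: "z = q [^]\<^bsub>S\<^esub> i" by blast
    have "z [^]\<^bsub>S\<^esub> p = (q [^]\<^bsub>S\<^esub> p) [^]\<^bsub>S\<^esub> i"
      unfolding z using q_Bij S.nat_pow_pow[of q] by (simp add: mult.commute)
    also have "\<dots> = \<one>\<^bsub>S\<^esub>" using q_pow_p by simp
    finally show "z \<in> Tp"
      using z S.subgroup_nat_pow_closed[OF subgroup_K0 q_in_K0] unfolding Tp_def by blast
  qed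
  have card_powers: "card ((\<lambda>i. q [^]\<^bsub>S\<^esub> i) ` {..<p}) = p" using inj by (simp add: card_image)
  have "finite Tp" using finite_subset[OF Tp_subset_K0 finite_K0] .
  then show ?thesis using card_seteq[OF _ sub] card_powers card_Tp_le by (metis order.refl)
qed

lemma q_pow_in_Tp: "q [^]\<^bsub>S\<^esub> (i::nat) \<in> Tp"
proof -
  have "i mod p < p" using p_pos by simp
  then show ?thesis unfolding Tp_eq q_pow_mod[of i, symmetric] by blast
qed

lemma Tp_Bij: "x \<in> Tp \<Longrightarrow> x \<in> Bij \<Omega>" using Tp_subset_K0 K0_subset_K K_Bij by blast

lemma p_dvd_m: "p dvd m"
proof (rule ccontr)
  assume "\<not> p dvd m"
  then have "coprime (int m) (int p)"
    using prime_p by (metis coprime_commute coprime_int_iff prime_imp_coprime)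
  moreover obtain a where a: "phi q = (a, False)" "0 \<le> a" "a < int m" "int m dvd int p * a"
    using phi_rotation_if_pow_p_eq_one q_in_K0 K0_subset_Kv q_pow_p by blast
  ultimately have "int m dvd a" by (simp add: coprime_dvd_mult_right_iff)
  then have "a = 0" using a(2,3) by (metis dvd_eq_mod_eq_0 mod_pos_pos_trivial)
  then have "phi q = phi \<one>\<^bsub>S\<^esub>" using a(1) phi_one by simp
  then have "q = \<one>\<^bsub>S\<^esub>"
    using phi_inj q_in_K0 K0_subset_Kv subgroup.one_closed[OF subgroup_Kv] by (auto simp: inj_on_def)
  then show False using q_ne_one by simp
qed

lemma m_ge_3: "m \<ge> 3"
proof -
  have "p \<le> m" using p_dvd_m m_pos by (simp add: dvd_imp_le)
  then show ?thesis using p_ge_3 by simp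
qed

section \<open>Cycles of order \<open>p\<close> on the blocks\<close>

lemma subgroup_Tp: "subgroup Tp S"
proof (rule S.subgroupI)
  show "Tp \<subseteq> carrier S" using Tp_Bij by auto
  show "Tp \<noteq> {}" using q_pow_in_Tp by blast
  show "inv\<^bsub>S\<^esub> a \<in> Tp" if a: "a \<in> Tp" for a
  proof -
    obtain i :: nat where "a = q [^]\<^bsub>S\<^esub> i" using a unfolding Tp_eq by blast
    then have "inv\<^bsub>S\<^esub> a = q [^]\<^bsub>S\<^esub> ((p - 1) * i)"
      using S.inv_nat_pow_eq q_Bij q_pow_p p_pos by simp
    then show ?thesis using q_pow_in_Tp by simp
  qed
  show "a \<otimes>\<^bsub>S\<^esub> b \<in> Tp" if ab: "a \<in> Tp" "b \<in> Tp" for a b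
  proof -
    obtain i j :: nat where "a = q [^]\<^bsub>S\<^esub> i" "b = q [^]\<^bsub>S\<^esub> j" using ab unfolding Tp_eq by blast
    then have "a \<otimes>\<^bsub>S\<^esub> b = q [^]\<^bsub>S\<^esub> (i + j)" using q_Bij by (simp add: S.nat_pow_mult)
    then show ?thesis using q_pow_in_Tp by simp
  qed
qed

lemma Tp_normal:
  assumes "k \<in> K" "x \<in> Tp"
  shows "k \<otimes>\<^bsub>S\<^esub> x \<otimes>\<^bsub>S\<^esub> inv\<^bsub>S\<^esub> k \<in> Tp"
proof -
  have "k \<otimes>\<^bsub>S\<^esub> x \<otimes>\<^bsub>S\<^esub> inv\<^bsub>S\<^esub> k \<in> K0" using K0_normal assms Tp_subset_K0 by blast
  moreover have "(k \<otimes>\<^bsub>S\<^esub> x \<otimes>\<^bsub>S\<^esub> inv\<^bsub>S\<^esub> k) [^]\<^bsub>S\<^esub> p = \<one>\<^bsub>S\<^esub>"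
    using S.conj_nat_pow[of k x p] K_Bij[OF assms(1)] Tp_Bij[OF assms(2)] assms(2)
    unfolding Tp_def by simp
  ultimately show ?thesis unfolding Tp_def by blast
qed

lemma conj_q_eq_pow:
  assumes "k \<in> K"
  shows "\<exists>e::nat. k \<otimes>\<^bsub>S\<^esub> q \<otimes>\<^bsub>S\<^esub> inv\<^bsub>S\<^esub> k = q [^]\<^bsub>S\<^esub> e"
proof -
  have "k \<otimes>\<^bsub>S\<^esub> q \<otimes>\<^bsub>S\<^esub> inv\<^bsub>S\<^esub> k \<in> Tp" using Tp_normal[OF assms q_pow_in_Tp[of 1]] q_Bij by simp
  then show ?thesis unfolding Tp_eq by blast
qed

lemma Tp_transitive_on_some_block: "\<exists>C\<in>\<B>. \<forall>x\<in>C. \<forall>y\<in>C. \<exists>t\<in>Tp. t x = y"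
proof -
  obtain u where u: "u \<in> \<Omega>" "q u \<noteq> u"
    using BijGroup_eq_oneI[OF q_Bij] q_ne_one by blast
  obtain C where C: "C \<in> \<B>" "u \<in> C" using block_exists[OF u(1)] by blast
  have "\<forall>x\<in>C. \<forall>y\<in>C. \<exists>t\<in>Tp. t x = y"
  proof (rule normal_subgroup_transitive_on_prime_block[OF finite_\<Omega> subgroup_K subgroup_Tp])
    show "\<forall>h\<in>K. \<forall>n\<in>Tp. h \<otimes>\<^bsub>S\<^esub> n \<otimes>\<^bsub>S\<^esub> inv\<^bsub>S\<^esub> h \<in> Tp" using Tp_normal by blast
    show "\<forall>x\<in>C. \<forall>y\<in>C. \<exists>h\<in>K. h x = y" using K_transitive_on_block[OF C(1)] .
    show "C \<subseteq> \<Omega>" using block_subset[OF C(1)] .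
    show "\<forall>n\<in>Tp. \<forall>x\<in>C. n x \<in> C" using K_maps_block C(1) Tp_subset_K0 K0_subset_K by blast
    show "Factorial_Ring.prime (card C)" using card_block C(1) prime_p by simp
    show "q \<in> Tp" using q_pow_in_Tp[of 1] q_Bij by simp
  qed (use u C in auto)
  then show ?thesis using C by blast
qed

definition block_cycle :: "'a set \<Rightarrow> ('a \<Rightarrow> 'a) \<Rightarrow> bool" where
  "block_cycle C r \<longleftrightarrow> r \<in> K \<and> r [^]\<^bsub>S\<^esub> p = \<one>\<^bsub>S\<^esub> \<and>
     (\<forall>x\<in>C. \<forall>y\<in>C. \<exists>i::nat. (r [^]\<^bsub>S\<^esub> i) x = y) \<and>
     (\<forall>k\<in>K. \<exists>e::nat. k \<otimes>\<^bsub>S\<^esub> r \<otimes>\<^bsub>S\<^esub> inv\<^bsub>S\<^esub> k = r [^]\<^bsub>S\<^esub> e)"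

lemma block_cycle_Bij: "block_cycle C r \<Longrightarrow> r \<in> Bij \<Omega>"
  unfolding block_cycle_def using K_Bij by blast

text \<open>Conjugate \<open>q\<close> by an element of \<open>G\<close> mapping a block on which \<open>\<langle>q\<rangle>\<close> is transitive
  onto \<open>C\<close>.\<close>

lemma exists_block_cycle:
  assumes C: "C \<in> \<B>"
  shows "\<exists>r. block_cycle C r"
proof -
  obtain C0 where C0: "C0 \<in> \<B>" "\<forall>x\<in>C0. \<forall>y\<in>C0. \<exists>t\<in>Tp. t x = y"
    using Tp_transitive_on_some_block by blast
  obtain g where g: "g \<in> G" "g ` C0 = C" using G_transitive_on_blocks[OF C0(1) C] by blast
  have gB: "g \<in> Bij \<Omega>" using G_Bij g(1) .
  have "(inv\<^bsub>S\<^esub> g) ` g ` C0 = C0"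
    using BijGroup_inv_apply[OF gB] block_subset[OF C0(1)] by (simp add: image_image subset_iff)
  then have ginv_C: "(inv\<^bsub>S\<^esub> g) ` C = C0" using g(2) by simp
  define r where "r = g \<otimes>\<^bsub>S\<^esub> q \<otimes>\<^bsub>S\<^esub> inv\<^bsub>S\<^esub> g"
  have r_pow: "r [^]\<^bsub>S\<^esub> i = g \<otimes>\<^bsub>S\<^esub> q [^]\<^bsub>S\<^esub> i \<otimes>\<^bsub>S\<^esub> inv\<^bsub>S\<^esub> g" for i :: nat
    unfolding r_def using S.conj_nat_pow[of g q i] gB q_Bij by simp
  have "r \<in> K" unfolding r_def using K_normal[OF g(1)] q_in_K0 K0_subset_K by blast
  moreover have "r [^]\<^bsub>S\<^esub> p = \<one>\<^bsub>S\<^esub>" using r_pow[of p] q_pow_p gB by simp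
  moreover have "\<exists>i::nat. (r [^]\<^bsub>S\<^esub> i) x = y" if xy: "x \<in> C" "y \<in> C" for x y
  proof -
    have "(inv\<^bsub>S\<^esub> g) x \<in> C0" "(inv\<^bsub>S\<^esub> g) y \<in> C0" using ginv_C xy by blast+
    then obtain t where t: "t \<in> Tp" "t ((inv\<^bsub>S\<^esub> g) x) = (inv\<^bsub>S\<^esub> g) y" using C0(2) by blast
    obtain i :: nat where i: "t = q [^]\<^bsub>S\<^esub> i" using t(1) unfolding Tp_eq by blast
    have x: "x \<in> \<Omega>" and y: "y \<in> \<Omega>" using xy block_subset[OF C] by auto
    have "(r [^]\<^bsub>S\<^esub> i) x = g (t ((inv\<^bsub>S\<^esub> g) x))"
      using r_pow[of i] i BijGroup_conj_apply[OF gB Tp_Bij[OF t(1)] x] by simp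
    also have "\<dots> = y" using t(2) BijGroup_apply_inv[OF gB y] by simp
    finally show ?thesis by blast
  qed
  moreover have "\<exists>e::nat. k \<otimes>\<^bsub>S\<^esub> r \<otimes>\<^bsub>S\<^esub> inv\<^bsub>S\<^esub> k = r [^]\<^bsub>S\<^esub> e" if k: "k \<in> K" for k
  proof -
    define k' where "k' = inv\<^bsub>S\<^esub> g \<otimes>\<^bsub>S\<^esub> k \<otimes>\<^bsub>S\<^esub> g"
    have "k' \<in> K"
      using K_normal[OF subgroup.m_inv_closed[OF subgroup_G g(1)] k] gB unfolding k'_def by simp
    then obtain e :: nat where e: "k' \<otimes>\<^bsub>S\<^esub> q \<otimes>\<^bsub>S\<^esub> inv\<^bsub>S\<^esub> k' = q [^]\<^bsub>S\<^esub> e"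
      using conj_q_eq_pow by blast
    have "k \<otimes>\<^bsub>S\<^esub> r \<otimes>\<^bsub>S\<^esub> inv\<^bsub>S\<^esub> k = g \<otimes>\<^bsub>S\<^esub> (k' \<otimes>\<^bsub>S\<^esub> q \<otimes>\<^bsub>S\<^esub> inv\<^bsub>S\<^esub> k') \<otimes>\<^bsub>S\<^esub> inv\<^bsub>S\<^esub> g"
      unfolding r_def k'_def using S.conj_by_conjugate[of k g q] K_Bij[OF k] gB q_Bij by simp
    also have "\<dots> = r [^]\<^bsub>S\<^esub> e" using e r_pow by simp
    finally show ?thesis by blast
  qed
  ultimately show ?thesis unfolding block_cycle_def by blast
qed

section \<open>The order of the point stabiliser\<close>

definition rho :: "'a \<Rightarrow> 'a" where "rho = psi (1, False)"
definition sigma :: "'a \<Rightarrow> 'a" where "sigma = psi (0, True)"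

definition kappa :: "'a \<Rightarrow> 'a" where "kappa = psi ((- 2) mod int m, False)"

lemma rotation_one_in_D: "(1::int, False) \<in> carrier D"
  and reflection_zero_in_D: "(0::int, True) \<in> carrier D"
  using m_ge_3 by (simp_all add: carrier_dihedral_group)

lemma rho_Kv: "rho \<in> Kv" unfolding rho_def using psi_closed rotation_one_in_D .
lemma sigma_Kv: "sigma \<in> Kv" unfolding sigma_def using psi_closed reflection_zero_in_D .

lemma rho_sigma: "rho \<otimes>\<^bsub>S\<^esub> sigma = psi (1, True)"
  using psi_mult[OF rotation_one_in_D reflection_zero_in_D] m_ge_3
  unfolding rho_def sigma_def by (simp add: mult_dihedral_group)

lemma sigma_rho: "sigma \<otimes>\<^bsub>S\<^esub> rho = psi ((- 1) mod int m, True)"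
  using psi_mult[OF reflection_zero_in_D rotation_one_in_D]
  unfolding rho_def sigma_def by (simp add: mult_dihedral_group)

lemma kappa_eq: "kappa = (sigma \<otimes>\<^bsub>S\<^esub> rho) \<otimes>\<^bsub>S\<^esub> (rho \<otimes>\<^bsub>S\<^esub> sigma)"
proof -
  have "((- 1) mod int m, True) \<otimes>\<^bsub>D\<^esub> (1, True) = ((- 2) mod int m, False)"
    by (simp add: mult_dihedral_group mod_diff_left_eq)
  then show ?thesis
    using psi_mult[of "((- 1) mod int m, True)" "(1, True)"] m_ge_3
    unfolding kappa_def rho_sigma sigma_rho by (simp add: carrier_dihedral_group)
qed

lemma kappa_Kv: "kappa \<in> Kv"
  unfolding kappa_def using m_ge_3 by (intro psi_closed) (simp add: carrier_dihedral_group)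

lemma kappa_Bij: "kappa \<in> Bij \<Omega>" using kappa_Kv Kv_Bij by blast

lemma inv_sigma_rho: "inv\<^bsub>S\<^esub> (sigma \<otimes>\<^bsub>S\<^esub> rho) = sigma \<otimes>\<^bsub>S\<^esub> rho"
proof -
  have "((- 1) mod int m, True) \<in> carrier D" using m_ge_3 by (simp add: carrier_dihedral_group)
  moreover have "((- 1) mod int m, True) \<otimes>\<^bsub>D\<^esub> ((- 1) mod int m, True) = (0, False)"
    by (simp add: mult_dihedral_group)
  ultimately have "(sigma \<otimes>\<^bsub>S\<^esub> rho) \<otimes>\<^bsub>S\<^esub> (sigma \<otimes>\<^bsub>S\<^esub> rho) = \<one>\<^bsub>S\<^esub>"
    unfolding sigma_rho using psi_mult psi_one by metis
  then show ?thesis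
    using S.inv_equality rho_Kv sigma_Kv Kv_Bij by (metis BijGroup_mult_closed carrier_BijGroup)
qed

text \<open>Conjugation by elements of \<open>K\<close> acts on \<open>\<langle>r\<rangle>\<close> through exponents, and exponents commute;
  hence the reflections \<open>\<rho>\<sigma>\<close> and \<open>\<sigma>\<rho>\<close> act alike on \<open>\<langle>r\<rangle>\<close>.\<close>

lemma kappa_commutes_block_cycle:
  assumes r: "block_cycle C r"
  shows "kappa \<otimes>\<^bsub>S\<^esub> r = r \<otimes>\<^bsub>S\<^esub> kappa"
proof -
  have rB: "r \<in> Bij \<Omega>" using block_cycle_Bij[OF r] .
  have rhoB: "rho \<in> Bij \<Omega>" and sigmaB: "sigma \<in> Bij \<Omega>" using rho_Kv sigma_Kv Kv_Bij by auto
  have "rho \<in> K" "sigma \<in> K" using rho_Kv sigma_Kv Kv_subset_K by auto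
  then obtain a b :: nat where
    a: "rho \<otimes>\<^bsub>S\<^esub> r \<otimes>\<^bsub>S\<^esub> inv\<^bsub>S\<^esub> rho = r [^]\<^bsub>S\<^esub> a" and
    b: "sigma \<otimes>\<^bsub>S\<^esub> r \<otimes>\<^bsub>S\<^esub> inv\<^bsub>S\<^esub> sigma = r [^]\<^bsub>S\<^esub> b"
    using r unfolding block_cycle_def by meson
  have "(rho \<otimes>\<^bsub>S\<^esub> sigma) \<otimes>\<^bsub>S\<^esub> r \<otimes>\<^bsub>S\<^esub> inv\<^bsub>S\<^esub> (rho \<otimes>\<^bsub>S\<^esub> sigma)
      = rho \<otimes>\<^bsub>S\<^esub> (sigma \<otimes>\<^bsub>S\<^esub> r \<otimes>\<^bsub>S\<^esub> inv\<^bsub>S\<^esub> sigma) \<otimes>\<^bsub>S\<^esub> inv\<^bsub>S\<^esub> rho"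
    using S.conj_conj[of rho sigma r] rhoB sigmaB rB by simp
  also have "\<dots> = r [^]\<^bsub>S\<^esub> (a * b)"
    using b S.conj_nat_pow_if_conj_eq_pow[of rho r a b] a rhoB rB by simp
  finally have X: "(rho \<otimes>\<^bsub>S\<^esub> sigma) \<otimes>\<^bsub>S\<^esub> r \<otimes>\<^bsub>S\<^esub> inv\<^bsub>S\<^esub> (rho \<otimes>\<^bsub>S\<^esub> sigma) = r [^]\<^bsub>S\<^esub> (a * b)" .
  have "(sigma \<otimes>\<^bsub>S\<^esub> rho) \<otimes>\<^bsub>S\<^esub> r \<otimes>\<^bsub>S\<^esub> inv\<^bsub>S\<^esub> (sigma \<otimes>\<^bsub>S\<^esub> rho)
      = sigma \<otimes>\<^bsub>S\<^esub> (rho \<otimes>\<^bsub>S\<^esub> r \<otimes>\<^bsub>S\<^esub> inv\<^bsub>S\<^esub> rho) \<otimes>\<^bsub>S\<^esub> inv\<^bsub>S\<^esub> sigma"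
    using S.conj_conj[of sigma rho r] rhoB sigmaB rB by simp
  also have "\<dots> = r [^]\<^bsub>S\<^esub> (a * b)"
    using a S.conj_nat_pow_if_conj_eq_pow[of sigma r b a] b sigmaB rB by (simp add: mult.commute)
  finally have Y: "(sigma \<otimes>\<^bsub>S\<^esub> rho) \<otimes>\<^bsub>S\<^esub> r \<otimes>\<^bsub>S\<^esub> inv\<^bsub>S\<^esub> (sigma \<otimes>\<^bsub>S\<^esub> rho) = r [^]\<^bsub>S\<^esub> (a * b)" .
  have "(inv\<^bsub>S\<^esub> (sigma \<otimes>\<^bsub>S\<^esub> rho) \<otimes>\<^bsub>S\<^esub> (rho \<otimes>\<^bsub>S\<^esub> sigma)) \<otimes>\<^bsub>S\<^esub> r
      = r \<otimes>\<^bsub>S\<^esub> (inv\<^bsub>S\<^esub> (sigma \<otimes>\<^bsub>S\<^esub> rho) \<otimes>\<^bsub>S\<^esub> (rho \<otimes>\<^bsub>S\<^esub> sigma))"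
    by (rule S.commutes_if_conj_eq) (use rhoB sigmaB rB X Y in simp_all)
  then show ?thesis unfolding kappa_eq inv_sigma_rho .
qed

lemma kappa_pow_p_fixes_block:
  assumes C: "C \<in> \<B>" and r: "block_cycle C r" and x: "x \<in> C"
  shows "(kappa [^]\<^bsub>S\<^esub> p) x = x"
proof -
  have rB: "r \<in> Bij \<Omega>" using block_cycle_Bij[OF r] .
  have x\<Omega>: "x \<in> \<Omega>" using x block_subset[OF C] by blast
  have "kappa x \<in> C" using K_maps_block[OF _ C x] kappa_Kv Kv_subset_K by blast
  then obtain i0 :: nat where i0: "(r [^]\<^bsub>S\<^esub> i0) x = kappa x"
    using r x unfolding block_cycle_def by blast
  have commute: "kappa \<otimes>\<^bsub>S\<^esub> r [^]\<^bsub>S\<^esub> j = r [^]\<^bsub>S\<^esub> j \<otimes>\<^bsub>S\<^esub> kappa" for j :: nat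
    using S.group_commutes_pow[of r kappa j] kappa_commutes_block_cycle[OF r] kappa_Bij rB by simp
  have pow: "(kappa [^]\<^bsub>S\<^esub> k) x = (r [^]\<^bsub>S\<^esub> (i0 * k)) x" for k :: nat
  proof (induction k)
    case (Suc k)
    have "(kappa [^]\<^bsub>S\<^esub> Suc k) x = kappa ((r [^]\<^bsub>S\<^esub> (i0 * k)) x)"
      using Suc kappa_Bij x\<Omega> S.nat_pow_Suc2[of kappa k]
      by (simp add: BijGroup_mult_apply del: S.nat_pow_Suc)
    also have "\<dots> = (kappa \<otimes>\<^bsub>S\<^esub> r [^]\<^bsub>S\<^esub> (i0 * k)) x"
      using kappa_Bij rB x\<Omega> by (simp add: BijGroup_mult_apply)
    also have "\<dots> = (r [^]\<^bsub>S\<^esub> (i0 * k) \<otimes>\<^bsub>S\<^esub> kappa) x" by (simp only: commute)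
    also have "\<dots> = (r [^]\<^bsub>S\<^esub> (i0 * k)) ((r [^]\<^bsub>S\<^esub> i0) x)"
      using kappa_Bij rB x\<Omega> i0 by (simp add: BijGroup_mult_apply)
    also have "\<dots> = (r [^]\<^bsub>S\<^esub> (i0 * k) \<otimes>\<^bsub>S\<^esub> r [^]\<^bsub>S\<^esub> i0) x"
      using rB x\<Omega> by (simp add: BijGroup_mult_apply)
    also have "\<dots> = (r [^]\<^bsub>S\<^esub> (i0 * Suc k)) x"
      using rB by (simp add: S.nat_pow_mult add.commute)
    finally show ?case .
  qed simp
  have "(kappa [^]\<^bsub>S\<^esub> p) x = ((r [^]\<^bsub>S\<^esub> p) [^]\<^bsub>S\<^esub> i0) x"
    using pow[of p] rB by (simp add: S.nat_pow_pow mult.commute)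
  also have "\<dots> = x" using r x\<Omega> unfolding block_cycle_def by (simp add: BijGroup_one_apply)
  finally show ?thesis .
qed

lemma kappa_pow_p: "kappa [^]\<^bsub>S\<^esub> p = \<one>\<^bsub>S\<^esub>"
proof (rule BijGroup_eq_oneI)
  show "kappa [^]\<^bsub>S\<^esub> p \<in> Bij \<Omega>" using kappa_Bij by simp
  fix x assume "x \<in> \<Omega>"
  then obtain C where C: "C \<in> \<B>" "x \<in> C" using block_exists by blast
  then obtain r where "block_cycle C r" using exists_block_cycle by blast
  then show "(kappa [^]\<^bsub>S\<^esub> p) x = x" using kappa_pow_p_fixes_block C by blast
qed

lemma m_dvd_2p: "m dvd 2 * p"
proof -
  have "((- 2) mod int m, False) \<in> carrier D" using m_ge_3 by (simp add: carrier_dihedral_group)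
  then have "((- 2) mod int m, False) [^]\<^bsub>D\<^esub> p = (0, False)"
    using phi_pow[OF kappa_Kv, of p] kappa_pow_p phi_one phi_psi unfolding kappa_def by simp
  then have "int m dvd int p * (- 2)"
    by (simp add: dihedral_group_pow_rotation mod_mult_right_eq dvd_eq_mod_eq_0)
  then have "int m dvd int (2 * p)" by (simp add: mult.commute)
  then show ?thesis by (simp only: int_dvd_int_iff)
qed

lemma m_eq_p_or_2p: "m = p \<or> m = 2 * p"
proof -
  obtain t where t: "m = p * t" using p_dvd_m by blast
  then have "t dvd 2" using m_dvd_2p p_pos by (simp add: mult.commute)
  then have "t = 1 \<or> t = 2" using dvd_imp_le[of t 2] m_pos t by (auto simp: le_Suc_eq)
  then show ?thesis using t by auto
qed

section \<open>The decomposition of \<open>K\<close>\<close>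

lemma card_K: "card K = p * (2 * m)"
proof -
  have "perm_orbit K v = B"
  proof
    show "perm_orbit K v \<subseteq> B" using K_maps_block[OF _ B_block v_in_B] unfolding perm_orbit_def by blast
    show "B \<subseteq> perm_orbit K v"
    proof
      fix y assume "y \<in> B"
      then obtain k where "k \<in> K" "k v = y" using K_transitive_on_block[OF B_block] v_in_B by blast
      then show "y \<in> perm_orbit K v" unfolding perm_orbit_def by blast
    qed
  qed
  moreover have "{g \<in> K. g v = v} = Kv" by (simp add: point_stabilizer_def)
  ultimately have "card B * card Kv = card K"
    using card_perm_orbit_mult_card_stabilizer[OF finite_\<Omega> subgroup_K v_in_\<Omega>] by simp
  then show ?thesis using card_block B_block card_Kv by simp
qed

definition rB :: "'a \<Rightarrow> 'a" where "rB = (SOME r. block_cycle B r)"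

lemma block_cycle_rB: "block_cycle B rB"
  unfolding rB_def using exists_block_cycle[OF B_block] by (rule someI_ex)

lemma rB_K: "rB \<in> K" and rB_pow_p: "rB [^]\<^bsub>S\<^esub> p = \<one>\<^bsub>S\<^esub>"
  and rB_transitive: "\<forall>x\<in>B. \<forall>y\<in>B. \<exists>i::nat. (rB [^]\<^bsub>S\<^esub> i) x = y"
  and conj_rB_eq_pow: "k \<in> K \<Longrightarrow> \<exists>e::nat. k \<otimes>\<^bsub>S\<^esub> rB \<otimes>\<^bsub>S\<^esub> inv\<^bsub>S\<^esub> k = rB [^]\<^bsub>S\<^esub> e"
  using block_cycle_rB unfolding block_cycle_def by blast+

lemma rB_Bij: "rB \<in> Bij \<Omega>" using rB_K K_Bij by blast

lemma rB_pow_mod: "rB [^]\<^bsub>S\<^esub> (i mod p) = rB [^]\<^bsub>S\<^esub> (i::nat)"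
  using S.nat_pow_mod_eq rB_Bij rB_pow_p by simp

lemma rB_orbit_v: "(\<lambda>i. (rB [^]\<^bsub>S\<^esub> i) v) ` {..<p} = B"
proof
  show "(\<lambda>i. (rB [^]\<^bsub>S\<^esub> i) v) ` {..<p} \<subseteq> B"
    using K_maps_block[OF K_pow[OF rB_K] B_block v_in_B] by blast
  show "B \<subseteq> (\<lambda>i. (rB [^]\<^bsub>S\<^esub> i) v) ` {..<p}"
  proof
    fix y assume "y \<in> B"
    then obtain i :: nat where "(rB [^]\<^bsub>S\<^esub> i) v = y" using rB_transitive v_in_B by blast
    moreover have "i mod p < p" using p_pos by simp
    ultimately show "y \<in> (\<lambda>i. (rB [^]\<^bsub>S\<^esub> i) v) ` {..<p}"
      using rB_pow_mod[of i] by (metis image_eqI lessThan_iff)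
  qed
qed

lemma inj_on_rB_orbit_v: "inj_on (\<lambda>i. (rB [^]\<^bsub>S\<^esub> i) v) {..<p}"
  by (rule eq_card_imp_inj_on) (simp_all add: rB_orbit_v card_block B_block)

lemma rB_pow_fixes_v_imp_one: "(rB [^]\<^bsub>S\<^esub> (k::nat)) v = v \<Longrightarrow> rB [^]\<^bsub>S\<^esub> k = \<one>\<^bsub>S\<^esub>"
proof -
  assume "(rB [^]\<^bsub>S\<^esub> k) v = v"
  then have "(rB [^]\<^bsub>S\<^esub> (k mod p)) v = (rB [^]\<^bsub>S\<^esub> (0::nat)) v"
    using rB_pow_mod v_in_\<Omega> by (simp add: BijGroup_one_apply)
  then have "k mod p = 0" using inj_on_rB_orbit_v p_pos by (simp add: inj_on_def)
  then show ?thesis using rB_pow_mod[of k] by simp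
qed

text \<open>The commutator \<open>[q, r\<^sub>B]\<close> is a power of \<open>r\<^sub>B\<close> and lies in \<open>K\<^sub>0\<close>, so it fixes \<open>v\<close>.\<close>

lemma q_rB_commute: "q \<otimes>\<^bsub>S\<^esub> rB = rB \<otimes>\<^bsub>S\<^esub> q"
proof -
  have qK: "q \<in> K" using q_in_K0 K0_subset_K by blast
  obtain e :: nat where e: "q \<otimes>\<^bsub>S\<^esub> rB \<otimes>\<^bsub>S\<^esub> inv\<^bsub>S\<^esub> q = rB [^]\<^bsub>S\<^esub> e"
    using conj_rB_eq_pow[OF qK] by blast
  define c where "c = q \<otimes>\<^bsub>S\<^esub> rB \<otimes>\<^bsub>S\<^esub> inv\<^bsub>S\<^esub> q \<otimes>\<^bsub>S\<^esub> inv\<^bsub>S\<^esub> rB"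
  have "c = rB [^]\<^bsub>S\<^esub> e \<otimes>\<^bsub>S\<^esub> rB [^]\<^bsub>S\<^esub> ((p - 1) * 1)"
    unfolding c_def e using S.inv_nat_pow_eq[of rB p 1] rB_Bij rB_pow_p p_pos by simp
  then have c_pow: "c = rB [^]\<^bsub>S\<^esub> (e + (p - 1) * 1)"
    using S.nat_pow_mult[of rB e "(p - 1) * 1"] rB_Bij by simp
  define w where "w = rB \<otimes>\<^bsub>S\<^esub> inv\<^bsub>S\<^esub> q \<otimes>\<^bsub>S\<^esub> inv\<^bsub>S\<^esub> rB"
  have "inv\<^bsub>S\<^esub> q \<in> Tp" using subgroup.m_inv_closed[OF subgroup_Tp q_pow_in_Tp[of 1]] q_Bij by simp
  then have "w \<in> K0" unfolding w_def using Tp_normal[OF rB_K] Tp_subset_K0 by blast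
  moreover have "c = q \<otimes>\<^bsub>S\<^esub> w" unfolding c_def w_def using q_Bij rB_Bij by (simp add: S.m_assoc)
  ultimately have "c v = q (w v)"
    using q_Bij K0_subset_K K_Bij v_in_\<Omega> by (simp add: BijGroup_mult_apply subsetD)
  then have "c v = v" using K0_fixes_v[OF \<open>w \<in> K0\<close>] K0_fixes_v[OF q_in_K0] by simp
  then have "c = \<one>\<^bsub>S\<^esub>" using rB_pow_fixes_v_imp_one c_pow by simp
  then have "c \<otimes>\<^bsub>S\<^esub> rB \<otimes>\<^bsub>S\<^esub> q = rB \<otimes>\<^bsub>S\<^esub> q" using q_Bij rB_Bij by simp
  then show ?thesis unfolding c_def using q_Bij rB_Bij by (simp add: S.m_assoc)
qed

definition Zp2 :: "(int \<times> int) monoid" where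
  "Zp2 = DirProd (integer_mod_group p) (integer_mod_group p)"

definition embed_Zp2 :: "int \<times> int \<Rightarrow> 'a \<Rightarrow> 'a" where
  "embed_Zp2 x = q [^]\<^bsub>S\<^esub> nat (fst x) \<otimes>\<^bsub>S\<^esub> rB [^]\<^bsub>S\<^esub> nat (snd x)"

lemma carrier_Zp2: "carrier Zp2 = {0..<int p} \<times> {0..<int p}"
  using p_pos by (simp add: Zp2_def carrier_integer_mod_group)

lemma card_Zp2: "card (carrier Zp2) = p * p"
  by (simp add: carrier_Zp2 card_cartesian_product)

lemma group_Zp2: "group Zp2" unfolding Zp2_def by (simp add: DirProd_group)

lemma embed_Zp2_K: "embed_Zp2 x \<in> K"
  unfolding embed_Zp2_def using K_mult K_pow rB_K q_in_K0 K0_subset_K by blast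

lemma q_pow_rB_pow_commute: "q [^]\<^bsub>S\<^esub> (a::nat) \<otimes>\<^bsub>S\<^esub> rB [^]\<^bsub>S\<^esub> (b::nat) = rB [^]\<^bsub>S\<^esub> b \<otimes>\<^bsub>S\<^esub> q [^]\<^bsub>S\<^esub> a"
proof -
  have "q [^]\<^bsub>S\<^esub> a \<otimes>\<^bsub>S\<^esub> rB = rB \<otimes>\<^bsub>S\<^esub> q [^]\<^bsub>S\<^esub> a"
    using S.group_commutes_pow[of q rB a] q_rB_commute q_Bij rB_Bij by simp
  then show ?thesis
    using S.group_commutes_pow[of rB "q [^]\<^bsub>S\<^esub> a" b] q_Bij rB_Bij by simp
qed

lemma embed_Zp2_mult:
  assumes "x \<in> carrier Zp2" "y \<in> carrier Zp2"
  shows "embed_Zp2 (x \<otimes>\<^bsub>Zp2\<^esub> y) = embed_Zp2 x \<otimes>\<^bsub>S\<^esub> embed_Zp2 y"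
proof -
  obtain a b c d where abcd: "x = (a, b)" "y = (c, d)" by fastforce
  have nonneg: "0 \<le> a" "0 \<le> b" "0 \<le> c" "0 \<le> d" using assms abcd carrier_Zp2 by auto
  have "x \<otimes>\<^bsub>Zp2\<^esub> y = ((a + c) mod int p, (b + d) mod int p)"
    using abcd by (simp add: Zp2_def DirProd_def)
  moreover have "nat ((a + c) mod int p) = (nat a + nat c) mod p"
    "nat ((b + d) mod int p) = (nat b + nat d) mod p"
    using nonneg by (simp_all add: nat_mod_distrib nat_add_distrib)
  ultimately have "embed_Zp2 (x \<otimes>\<^bsub>Zp2\<^esub> y) = q [^]\<^bsub>S\<^esub> (nat a + nat c) \<otimes>\<^bsub>S\<^esub> rB [^]\<^bsub>S\<^esub> (nat b + nat d)"
    unfolding embed_Zp2_def using q_pow_mod rB_pow_mod by simp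
  also have "\<dots> = q [^]\<^bsub>S\<^esub> nat a \<otimes>\<^bsub>S\<^esub> (q [^]\<^bsub>S\<^esub> nat c \<otimes>\<^bsub>S\<^esub> rB [^]\<^bsub>S\<^esub> nat b) \<otimes>\<^bsub>S\<^esub> rB [^]\<^bsub>S\<^esub> nat d"
    using q_Bij rB_Bij by (simp add: S.nat_pow_mult[symmetric] S.m_assoc)
  also have "\<dots> = q [^]\<^bsub>S\<^esub> nat a \<otimes>\<^bsub>S\<^esub> (rB [^]\<^bsub>S\<^esub> nat b \<otimes>\<^bsub>S\<^esub> q [^]\<^bsub>S\<^esub> nat c) \<otimes>\<^bsub>S\<^esub> rB [^]\<^bsub>S\<^esub> nat d"
    using q_pow_rB_pow_commute[of "nat c" "nat b"] by simp
  also have "\<dots> = embed_Zp2 x \<otimes>\<^bsub>S\<^esub> embed_Zp2 y"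
    unfolding embed_Zp2_def abcd using q_Bij rB_Bij by (simp add: S.m_assoc)
  finally show ?thesis .
qed

lemma inj_on_embed_Zp2: "inj_on embed_Zp2 (carrier Zp2)"
proof (rule inj_onI)
  fix x y assume xy: "x \<in> carrier Zp2" "y \<in> carrier Zp2" "embed_Zp2 x = embed_Zp2 y"
  obtain a b c d where abcd: "x = (a, b)" "y = (c, d)" by fastforce
  have range: "0 \<le> a" "a < int p" "0 \<le> b" "b < int p" "0 \<le> c" "c < int p" "0 \<le> d" "d < int p"
    using xy abcd carrier_Zp2 by auto
  have e: "q [^]\<^bsub>S\<^esub> nat a \<otimes>\<^bsub>S\<^esub> rB [^]\<^bsub>S\<^esub> nat b = q [^]\<^bsub>S\<^esub> nat c \<otimes>\<^bsub>S\<^esub> rB [^]\<^bsub>S\<^esub> nat d"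
    using xy(3) abcd unfolding embed_Zp2_def by simp
  have at_v: "(q [^]\<^bsub>S\<^esub> i \<otimes>\<^bsub>S\<^esub> rB [^]\<^bsub>S\<^esub> j) v = (rB [^]\<^bsub>S\<^esub> j) v" for i j :: nat
  proof -
    have "(rB [^]\<^bsub>S\<^esub> j) v \<in> B" using K_maps_block[OF K_pow[OF rB_K] B_block v_in_B] .
    then have "(q [^]\<^bsub>S\<^esub> i) ((rB [^]\<^bsub>S\<^esub> j) v) = (rB [^]\<^bsub>S\<^esub> j) v"
      using S.subgroup_nat_pow_closed[OF subgroup_K0 q_in_K0] unfolding pointwise_kernel_def by blast
    then show ?thesis using q_Bij rB_Bij v_in_\<Omega> by (simp add: BijGroup_mult_apply)
  qed
  have "(rB [^]\<^bsub>S\<^esub> nat b) v = (rB [^]\<^bsub>S\<^esub> nat d) v" using e at_v by metis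
  then have bd: "nat b = nat d" using inj_on_rB_orbit_v range by (simp add: inj_on_def)
  then have "q [^]\<^bsub>S\<^esub> nat a = q [^]\<^bsub>S\<^esub> nat c" using e q_Bij rB_Bij by simp
  then have "nat a = nat c"
    using S.inj_on_nat_pow_prime[of q p] q_Bij q_ne_one q_pow_p prime_p range by (simp add: inj_on_def)
  then show "x = y" using abcd bd range by (simp add: eq_nat_nat_iff)
qed

lemma conj_embed_Zp2:
  assumes k: "k \<in> K" and x: "x \<in> carrier Zp2"
  shows "k \<otimes>\<^bsub>S\<^esub> embed_Zp2 x \<otimes>\<^bsub>S\<^esub> inv\<^bsub>S\<^esub> k \<in> embed_Zp2 ` carrier Zp2"
proof -
  have kB: "k \<in> Bij \<Omega>" using K_Bij k by blast
  obtain a b where ab: "x = (a, b)" by fastforce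
  obtain e1 :: nat where e1: "k \<otimes>\<^bsub>S\<^esub> q \<otimes>\<^bsub>S\<^esub> inv\<^bsub>S\<^esub> k = q [^]\<^bsub>S\<^esub> e1" using conj_q_eq_pow[OF k] by blast
  obtain e2 :: nat where e2: "k \<otimes>\<^bsub>S\<^esub> rB \<otimes>\<^bsub>S\<^esub> inv\<^bsub>S\<^esub> k = rB [^]\<^bsub>S\<^esub> e2" using conj_rB_eq_pow[OF k] by blast
  have "k \<otimes>\<^bsub>S\<^esub> embed_Zp2 x \<otimes>\<^bsub>S\<^esub> inv\<^bsub>S\<^esub> k
      = (k \<otimes>\<^bsub>S\<^esub> q [^]\<^bsub>S\<^esub> nat a \<otimes>\<^bsub>S\<^esub> inv\<^bsub>S\<^esub> k) \<otimes>\<^bsub>S\<^esub> (k \<otimes>\<^bsub>S\<^esub> rB [^]\<^bsub>S\<^esub> nat b \<otimes>\<^bsub>S\<^esub> inv\<^bsub>S\<^esub> k)"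
    unfolding embed_Zp2_def ab using kB q_Bij rB_Bij by (simp add: S.m_assoc S.inv_mult_cancel_left)
  also have "\<dots> = q [^]\<^bsub>S\<^esub> (e1 * nat a) \<otimes>\<^bsub>S\<^esub> rB [^]\<^bsub>S\<^esub> (e2 * nat b)"
    using S.conj_nat_pow_if_conj_eq_pow[OF _ _ e1] S.conj_nat_pow_if_conj_eq_pow[OF _ _ e2] kB q_Bij rB_Bij
    by simp
  also have "\<dots> = embed_Zp2 (int ((e1 * nat a) mod p), int ((e2 * nat b) mod p))"
    unfolding embed_Zp2_def using q_pow_mod rB_pow_mod by simp
  finally show ?thesis using p_pos carrier_Zp2 by auto
qed

lemma embed_Zp2_pow_p: "embed_Zp2 x [^]\<^bsub>S\<^esub> p = \<one>\<^bsub>S\<^esub>"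
proof -
  have "embed_Zp2 x [^]\<^bsub>S\<^esub> p
      = (q [^]\<^bsub>S\<^esub> nat (fst x)) [^]\<^bsub>S\<^esub> p \<otimes>\<^bsub>S\<^esub> (rB [^]\<^bsub>S\<^esub> nat (snd x)) [^]\<^bsub>S\<^esub> p"
    unfolding embed_Zp2_def
    using S.pow_mult_distrib[OF q_pow_rB_pow_commute[of "nat (fst x)" "nat (snd x)"]] q_Bij rB_Bij
    by simp
  also have "\<dots> = (q [^]\<^bsub>S\<^esub> p) [^]\<^bsub>S\<^esub> nat (fst x) \<otimes>\<^bsub>S\<^esub> (rB [^]\<^bsub>S\<^esub> p) [^]\<^bsub>S\<^esub> nat (snd x)"
    using q_Bij rB_Bij by (simp add: S.nat_pow_pow mult.commute)
  also have "\<dots> = \<one>\<^bsub>S\<^esub>" using q_pow_p rB_pow_p by simp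
  finally show ?thesis .
qed

lemma perm_group_K: "perm_group \<Omega> K = S\<lparr>carrier := K\<rparr>" by (simp add: perm_group_def)

text \<open>As \<open>p\<close> is odd, \<open>\<langle>q\<rangle> \<times> \<langle>r\<^sub>B\<rangle>\<close> meets any subgroup of exponent 2 trivially.\<close>

lemma is_semidirect_of_Zp2:
  fixes H :: "('h, 'e) monoid_scheme"
  assumes H: "group H" "finite (carrier H)"
    and beta: "beta \<in> carrier H \<rightarrow> Kv" "inj_on beta (carrier H)"
    and beta_mult: "\<And>a b. a \<in> carrier H \<Longrightarrow> b \<in> carrier H \<Longrightarrow> beta (a \<otimes>\<^bsub>H\<^esub> b) = beta a \<otimes>\<^bsub>S\<^esub> beta b"
    and beta_square: "\<And>a. a \<in> carrier H \<Longrightarrow> beta a \<otimes>\<^bsub>S\<^esub> beta a = \<one>\<^bsub>S\<^esub>"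
    and card: "card K = card (carrier Zp2) * card (carrier H)"
  shows "is_semidirect_of (perm_group \<Omega> K) Zp2 H"
proof -
  have beta_K: "a \<in> carrier H \<Longrightarrow> beta a \<in> K" for a using beta(1) Kv_subset_K by blast
  interpret internal_semidirect "perm_group \<Omega> K" Zp2 H embed_Zp2 beta
  proof (intro internal_semidirect.intro internal_semidirect_axioms.intro)
    show "group (perm_group \<Omega> K)" using S.subgroup_imp_group[OF subgroup_K] by (simp add: perm_group_K)
    show "finite (carrier Zp2)" by (simp add: carrier_Zp2)
    show "embed_Zp2 \<in> hom Zp2 (perm_group \<Omega> K)"
      by (rule homI) (simp_all add: perm_group_K embed_Zp2_K embed_Zp2_mult)
    show "inj_on embed_Zp2 (carrier Zp2)" by (rule inj_on_embed_Zp2)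
    show "beta \<in> hom H (perm_group \<Omega> K)"
      by (rule homI) (simp_all add: perm_group_K beta_K beta_mult)
    show "beta h \<otimes>\<^bsub>perm_group \<Omega> K\<^esub> embed_Zp2 x \<otimes>\<^bsub>perm_group \<Omega> K\<^esub> inv\<^bsub>perm_group \<Omega> K\<^esub> beta h
        \<in> embed_Zp2 ` carrier Zp2" if "h \<in> carrier H" "x \<in> carrier Zp2" for h x
      using conj_embed_Zp2[OF beta_K that(2)] S.m_inv_consistent[OF subgroup_K beta_K] that(1)
      by (simp add: perm_group_K)
    show "embed_Zp2 x = \<one>\<^bsub>perm_group \<Omega> K\<^esub>"
      if "x \<in> carrier Zp2" "h \<in> carrier H" "embed_Zp2 x = beta h" for x h
    proof -
      have "embed_Zp2 x \<otimes>\<^bsub>S\<^esub> embed_Zp2 x = \<one>\<^bsub>S\<^esub>" using beta_square that by simp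
      then have "embed_Zp2 x = \<one>\<^bsub>S\<^esub>"
        using S.eq_one_if_square_and_odd_pow[OF _ _ embed_Zp2_pow_p odd_p] K_Bij[OF embed_Zp2_K] by simp
      then show ?thesis by (simp add: perm_group_K)
    qed
    show "card (carrier (perm_group \<Omega> K)) = card (carrier Zp2) * card (carrier H)"
      using card by (simp add: perm_group_K)
  qed (use H beta group_Zp2 in auto)
  show ?thesis by (rule is_semidirect_of)
qed

lemma K_semidirect_if_m_eq_p:
  assumes m: "m = p"
  shows "is_semidirect_of (perm_group \<Omega> K) Zp2 (integer_mod_group 2)"
proof -
  define beta :: "int \<Rightarrow> 'a \<Rightarrow> 'a" where "beta i = (if i = 0 then \<one>\<^bsub>S\<^esub> else sigma)" for i
  have Z2: "carrier (integer_mod_group 2) = {0, 1}" by (auto simp: carrier_integer_mod_group)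
  have sigma_square: "sigma \<otimes>\<^bsub>S\<^esub> sigma = \<one>\<^bsub>S\<^esub>"
    using psi_mult[OF reflection_zero_in_D reflection_zero_in_D] psi_one
    unfolding sigma_def by (simp add: mult_dihedral_group)
  have sigma_ne_one: "sigma \<noteq> \<one>\<^bsub>S\<^esub>"
    using phi_psi[OF reflection_zero_in_D] phi_one unfolding sigma_def by auto
  show ?thesis
  proof (rule is_semidirect_of_Zp2)
    show "beta \<in> carrier (integer_mod_group 2) \<rightarrow> Kv"
      using sigma_Kv subgroup.one_closed[OF subgroup_Kv] Z2 unfolding beta_def by auto
    show "inj_on beta (carrier (integer_mod_group 2))"
      using Z2 sigma_ne_one unfolding beta_def by (auto simp: inj_on_def)
    show "beta (a \<otimes>\<^bsub>integer_mod_group 2\<^esub> b) = beta a \<otimes>\<^bsub>S\<^esub> beta b"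
      if "a \<in> carrier (integer_mod_group 2)" "b \<in> carrier (integer_mod_group 2)" for a b
      using that Z2 sigma_square sigma_Kv Kv_Bij unfolding beta_def by auto
    show "beta a \<otimes>\<^bsub>S\<^esub> beta a = \<one>\<^bsub>S\<^esub>" if "a \<in> carrier (integer_mod_group 2)" for a
      using sigma_square unfolding beta_def by simp
    show "card K = card (carrier Zp2) * card (carrier (integer_mod_group 2))"
      using card_K card_Zp2 Z2 m by simp
  qed (simp_all add: Z2)
qed

text \<open>For \<open>m = 2p\<close> the complement is \<open>{1, \<rho>\<^sup>p, \<sigma>, \<rho>\<^sup>p\<sigma>} \<cong> D\<^sub>4\<close>.\<close>

lemma K_semidirect_if_m_eq_2p:
  assumes m: "m = 2 * p"
  shows "is_semidirect_of (perm_group \<Omega> K) Zp2 (dihedral_group 2)"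
proof -
  define beta :: "int \<times> bool \<Rightarrow> 'a \<Rightarrow> 'a" where "beta x = psi (int p * fst x, snd x)" for x
  have D2: "carrier (dihedral_group 2) = {0, 1} \<times> (UNIV :: bool set)"
    by (auto simp: carrier_dihedral_group)
  have in_D: "(int p * i, e) \<in> carrier D" if "i \<in> {0, 1}" for i e
    using that m p_pos by (auto simp: carrier_dihedral_group)
  have beta_mult: "beta (a \<otimes>\<^bsub>dihedral_group 2\<^esub> b) = beta a \<otimes>\<^bsub>S\<^esub> beta b"
    if ab: "a \<in> carrier (dihedral_group 2)" "b \<in> carrier (dihedral_group 2)" for a b
  proof -
    obtain i e j f where ij: "a = (i, e)" "b = (j, f)" "i \<in> {0, 1}" "j \<in> {0, 1}"
      using ab D2 by (cases a, cases b) auto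
    have "psi ((int p * i, e) \<otimes>\<^bsub>D\<^esub> (int p * j, f)) = psi (int p * i, e) \<otimes>\<^bsub>S\<^esub> psi (int p * j, f)"
      by (rule psi_mult[OF in_D[OF ij(3)] in_D[OF ij(4)]])
    then show ?thesis
      using dihedral_group_mult_scaled[OF ij(3,4), of p e f] m unfolding beta_def ij by simp
  qed
  show ?thesis
  proof (rule is_semidirect_of_Zp2)
    show "beta \<in> carrier (dihedral_group 2) \<rightarrow> Kv"
    proof
      fix x assume "x \<in> carrier (dihedral_group 2)"
      then obtain i e where "x = (i, e)" "i \<in> {0, 1}" using D2 by auto
      then show "beta x \<in> Kv" using psi_closed[OF in_D] unfolding beta_def by simp
    qed
    show "inj_on beta (carrier (dihedral_group 2))"
    proof (rule inj_onI)
      fix a b assume ab: "a \<in> carrier (dihedral_group 2)" "b \<in> carrier (dihedral_group 2)" "beta a = beta b"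
      obtain i e j f where ij: "a = (i, e)" "b = (j, f)" "i \<in> {0, 1}" "j \<in> {0, 1}"
        using ab(1,2) D2 by (cases a, cases b) auto
      have "phi (beta a) = phi (beta b)" using ab(3) by simp
      then have "(int p * i, e) = (int p * j, f)" unfolding beta_def using ij phi_psi in_D by simp
      then show "a = b" using ij p_pos by simp
    qed
    show "beta a \<otimes>\<^bsub>S\<^esub> beta a = \<one>\<^bsub>S\<^esub>" if a: "a \<in> carrier (dihedral_group 2)" for a
      using beta_mult[OF a a] a D2 psi_one by (auto simp: beta_def mult_dihedral_group)
    show "card K = card (carrier Zp2) * card (carrier (dihedral_group 2))"
      using card_K card_Zp2 card_dihedral_group[of 2] m by simp
  qed (use beta_mult in \<open>simp_all add: group_dihedral_group carrier_dihedral_group\<close>)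
qed

theorem K_semidirect:
  "is_semidirect_of (perm_group \<Omega> K) Zp2 (integer_mod_group 2)
   \<or> is_semidirect_of (perm_group \<Omega> K) Zp2 (dihedral_group 2)"
  using m_eq_p_or_2p K_semidirect_if_m_eq_p K_semidirect_if_m_eq_2p by blast

end

theorem mainTheorem11:
  fixes p n m :: nat and \<Omega> :: "'a set" and G :: "('a \<Rightarrow> 'a) set"
    and \<B> :: "'a set set" and B :: "'a set" and v :: 'a
  assumes "Factorial_Ring.prime p" and "p \<ge> 3"
    and "finite \<Omega>" and "card \<Omega> = p ^ 2"
    and "subgroup G (BijGroup \<Omega>)"
    and "transitive_on \<Omega> G"
    and "n \<ge> 2"
    and "\<forall>w\<in>\<Omega>. perm_group \<Omega> (point_stabilizer G w) \<cong> dihedral_group n"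
    and "block_system \<Omega> G \<B>" and "\<forall>C\<in>\<B>. card C = p"
    and "B \<in> \<B>" and "v \<in> B"
    and "pointwise_kernel (block_kernel G \<B>) B \<noteq> {\<one>\<^bsub>BijGroup \<Omega>\<^esub>}"
    and "perm_group \<Omega> (point_stabilizer (block_kernel G \<B>) v) \<cong> dihedral_group m"
    and "m = n \<or> 2 * m = n"
  shows "is_semidirect_of (perm_group \<Omega> (block_kernel G \<B>))
           (DirProd (integer_mod_group p) (integer_mod_group p)) (integer_mod_group 2)
       \<or> is_semidirect_of (perm_group \<Omega> (block_kernel G \<B>))
           (DirProd (integer_mod_group p) (integer_mod_group p)) (dihedral_group 2)"
proof -
  interpret imprimitive_kernel p m \<Omega> G \<B> B v
    by (rule imprimitive_kernel.intro[OF assms(1-3,5,6,9-14)])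
  show ?thesis using K_semidirect unfolding Zp2_def .
qed

end
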